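(* In the standing setup, the density of $\tilde S_n=Z_1+\cdots+Z_n$ is $$f_{\tilde S_n}(x)=\sum_{l=n}^{\infty}A_l\,e^{-mx}\,x^{l-1}\frac{m^{l}}{\Gamma(l)},\qquad x>0,$$ where $A_l=\Pr(K=l)$; moreover $A_l=0$ for $l<n$ and $$A_l=\sum_{\nu_1=0}^{m-1}\cdots\sum_{\nu_n=0}^{m-1}\gamma\Big(\tfrac{\nu_1}{m},\dots,\tfrac{\nu_n}{m}\Big)\Pr\Big(\sum_{i=1}^n\sum_{j=\nu_i+1}^m\Delta_{i,j}=l\Big).$$
   Context: Standing setup. Let $n\ge2$ and $m\ge1$ be integers. Let $\alpha:\{0,\tfrac1m,\dots,1\}^n\to\mathbb R$ be such that $C_B(u_1,\dots,u_n)=\sum_{\nu_1=0}^{m}\cdots\sum_{\nu_n=0}^{m}\alpha(\tfrac{\nu_1}{m},\dots,\tfrac{\nu_n}{m})\prod_{i=1}^n G_{\nu_i:m}(u_i)$, with $G_{\nu:m}(u)=\binom{m}{\nu}u^\nu(1-u)^{m-\nu}$, is a copula on $[0,1]^n$ (Bernstein copula). For $\nu_i\in\{0,\dots,m-1\}$ put $\gamma(\tfrac{\nu_1}{m},\dots,\tfrac{\nu_n}{m})=\sum_{l_1=0}^1\cdots\sum_{l_n=0}^1(-1)^{n+l_1+\cdots+l_n}\alpha(\tfrac{\nu_1+l_1}{m},\dots,\tfrac{\nu_n+l_n}{m})$; these numbers are nonnegative, sum to $1$, and $C_B$ has density $c_B(u)=\sum_{\nu_1=0}^{m-1}\cdots\sum_{\nu_n=0}^{m-1}\gamma(\tfrac{\nu_1}{m},\dots,\tfrac{\nu_n}{m})\prod_{i=1}^n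 mG_{\nu_i:m-1}(u_i)$. Let $(Z_1,\dots,Z_n)$ have standard exponential (mean 1) marginals and joint survival function $\Pr(Z_1>z_1,\dots,Z_n>z_n)=C_B(e^{-z_1},\dots,e^{-z_n})$. Let $\Theta$ be a positive random variable independent of $(Z_1,\dots,Z_n)$ with density $f_\Theta$ and Laplace transform $f_\Theta^\star(s)=\int_0^\infty e^{-s\theta}f_\Theta(\theta)d\theta$; $f_\Theta^{\star(k)}$ denotes its $k$-th derivative. Put $X_i=Z_i/\Theta$, $S_n=X_1+\cdots+X_n$, $\tilde S_n=Z_1+\cdots+Z_n$. Let $(N_1,\dots,N_n)$ be a random vector with $\Pr(N_1=\nu_1,\dots,N_n=\nu_n)=\gamma(\tfrac{\nu_1}{m},\dots,\tfrac{\nu_n}{m})$, $\nu_i\in\{0,\dots,m-1\}$, and let $\{\Delta_{i,j}:1\le i\le n,1\le j\le m\}$ be mutually independent random variables, independent of $(N_1,\dots,N_n)$, with shifted geometric law $\Pr(\Delta_{i,j}=l)=\tfrac jm(1-\tfrac jm)^{l-1}$, $l=1,2,\dots$ (with $0^0=1$, so $\Delta_{i,m}=1$). Put $K_i=\sum_{j=N_i+1}^m\Delta_{i,j}$, $K=\sum_{i=1}^nK_i$ and $A_l=\Pr(K=l)$. *)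

theory Defs
  imports "HOL-Probability.Probability"
begin

text \<open>Index vectors (nu_1,...,nu_n) are functions nat => nat restricted to {..<n}
  (PiE, undefined outside). alpha(nu_1/m,...,nu_n/m) is written alpha nu.\<close>

definition bern_G :: "nat \<Rightarrow> nat \<Rightarrow> real \<Rightarrow> real" where
  "bern_G m \<nu> u = real (m choose \<nu>) * u ^ \<nu> * (1 - u) ^ (m - \<nu>)"

definition alpha_grid :: "nat \<Rightarrow> nat \<Rightarrow> (nat \<Rightarrow> nat) set" where
  "alpha_grid n m = PiE {..<n} (\<lambda>_. {..m})"

definition gamma_grid :: "nat \<Rightarrow> nat \<Rightarrow> (nat \<Rightarrow> nat) set" where
  "gamma_grid n m = PiE {..<n} (\<lambda>_. {..<m})"

definition bernstein_copula ::
  "nat \<Rightarrow> nat \<Rightarrow> ((nat \<Rightarrow> nat) \<Rightarrow> real) \<Rightarrow> (nat \<Rightarrow> real) \<Rightarrow> real" where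
  "bernstein_copula n m \<alpha> u =
     (\<Sum>\<nu>\<in>alpha_grid n m. \<alpha> \<nu> * (\<Prod>i<n. bern_G m (\<nu> i) (u i)))"

text \<open>gamma(nu) = sum over l in {0,1}^n of (-1)^(n + l_1+...+l_n) alpha(nu + l);
  l is encoded by the set S = {i. l_i = 1}.\<close>
definition bern_gamma :: "nat \<Rightarrow> ((nat \<Rightarrow> nat) \<Rightarrow> real) \<Rightarrow> (nat \<Rightarrow> nat) \<Rightarrow> real" where
  "bern_gamma n \<alpha> \<nu> =
     (\<Sum>S\<in>Pow {..<n}. (-1) ^ (n + card S) *
        \<alpha> (\<lambda>i. if i < n then \<nu> i + (if i \<in> S then 1 else 0) else undefined))"

definition unit_cube :: "nat \<Rightarrow> (nat \<Rightarrow> real) set" where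
  "unit_cube n = {u. \<forall>i<n. 0 \<le> u i \<and> u i \<le> 1}"

definition is_copula :: "nat \<Rightarrow> ((nat \<Rightarrow> real) \<Rightarrow> real) \<Rightarrow> bool" where
  "is_copula n C \<longleftrightarrow>
     (\<forall>u\<in>unit_cube n. (\<exists>i<n. u i = 0) \<longrightarrow> C u = 0) \<and>
     (\<forall>u\<in>unit_cube n. \<forall>i<n. (\<forall>j<n. j \<noteq> i \<longrightarrow> u j = 1) \<longrightarrow> C u = u i) \<and>
     (\<forall>a\<in>unit_cube n. \<forall>b\<in>unit_cube n. (\<forall>i<n. a i \<le> b i) \<longrightarrow>
        0 \<le> (\<Sum>S\<in>Pow {..<n}. (-1) ^ card S * C (\<lambda>i. if i \<in> S then a i else b i)))"

definition shifted_geometric_pmf :: "real \<Rightarrow> nat pmf" where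
  "shifted_geometric_pmf p = map_pmf Suc (geometric_pmf p)"

text \<open>Joint law of the mutually independent family Delta_{i,j}, 1<=i<=n (here 0<=i<n), 1<=j<=m.\<close>
definition Delta_pmf :: "nat \<Rightarrow> nat \<Rightarrow> (nat \<times> nat \<Rightarrow> nat) pmf" where
  "Delta_pmf n m = Pi_pmf ({..<n} \<times> {1..m}) 0
      (\<lambda>(i, j). shifted_geometric_pmf (real j / real m))"

definition K_of :: "nat \<Rightarrow> nat \<Rightarrow> (nat \<Rightarrow> nat) \<Rightarrow> (nat \<times> nat \<Rightarrow> nat) \<Rightarrow> nat" where
  "K_of n m \<nu> d = (\<Sum>i<n. \<Sum>j\<in>{\<nu> i + 1..m}. d (i, j))"

definition K_pmf :: "nat \<Rightarrow> nat \<Rightarrow> (nat \<Rightarrow> nat) pmf \<Rightarrow> nat pmf" where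
  "K_pmf n m Npmf = do { \<nu> \<leftarrow> Npmf; d \<leftarrow> Delta_pmf n m; return_pmf (K_of n m \<nu> d) }"

end

theory Submission
  imports Defs
begin

text \<open>
  Expanding the copula in the tails T_nu(u) = sum_{k > nu} G_{k:m}(u) of the Bernstein basis shows
  that (Z_1, ..., Z_n) is the gamma-mixture, over the grid points nu, of vectors of independent
  variables with survival functions T_{nu_i}(e^{-z}).  Such a variable is minus the logarithm of a
  Beta(nu_i + 1, m - nu_i) variable, i.e. a sum of independent exponentials with rates
  nu_i + 1, ..., m; and an exponential with rate j is a geometric number Delta_{i,j} of
  independent Exp(m) phases (success probability j/m).  Hence, given N = nu, the sum of the Z_i
  consists of K phases, so its density is the Erlang(m) mixture with mixing law K.  Every
  coordinate contributes at least the phase Delta_{i,m} = 1, whence K >= n.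
\<close>

lemma nn_integral_FTC_Icc:
  fixes f F :: "real \<Rightarrow> real"
  assumes "a \<le> b"
    and deriv: "\<And>x. a \<le> x \<Longrightarrow> x \<le> b \<Longrightarrow> DERIV F x :> f x"
    and cont: "\<And>x. a \<le> x \<Longrightarrow> x \<le> b \<Longrightarrow> isCont f x"
    and nonneg: "\<And>x. a \<le> x \<Longrightarrow> x \<le> b \<Longrightarrow> 0 \<le> f x"
  shows "(\<integral>\<^sup>+x. ennreal (f x * indicator {a..b} x) \<partial>lborel) = ennreal (F b - F a)"
proof -
  have h: "has_bochner_integral lborel (\<lambda>x. f x * indicator {a..b} x) (F b - F a)"
    by (rule has_bochner_integral_FTC_Icc_real[OF assms(1) deriv cont])
  then have "(\<integral>\<^sup>+x. ennreal (f x * indicator {a..b} x) \<partial>lborel) = ennreal (\<integral>x. f x * indicator {a..b} x \<partial>lborel)"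
    using nonneg by (intro nn_integral_eq_integral) (auto simp: has_bochner_integral_iff indicator_def)
  with h show ?thesis
    by (simp add: has_bochner_integral_iff)
qed

lemma indicator_PiE_eq_prod:
  fixes A :: "'i \<Rightarrow> 'a set"
  assumes "finite I" "z \<in> (\<Pi>\<^sub>E i\<in>I. UNIV)"
  shows "(indicator (\<Pi>\<^sub>E i\<in>I. A i) z :: ennreal) = (\<Prod>i\<in>I. indicator (A i) (z i))"
proof (cases "\<forall>i\<in>I. z i \<in> A i")
  case True
  then show ?thesis using assms by (auto simp: PiE_def)
next
  case False
  then obtain i where i: "i \<in> I" "z i \<notin> A i" by auto
  then have "(\<Prod>i\<in>I. indicator (A i) (z i) :: ennreal) = 0"
    using assms by (intro prod_zero) (auto intro!: bexI[of _ i])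
  moreover have "z \<notin> (\<Pi>\<^sub>E i\<in>I. A i)" using i by auto
  ultimately show ?thesis by simp
qed

lemma PiM_density_eq_density_prod:
  fixes f :: "'i \<Rightarrow> real \<Rightarrow> real"
  assumes fin: "finite I" and f[measurable]: "\<And>i. f i \<in> borel_measurable borel"
    and prob: "\<And>i. i \<in> I \<Longrightarrow> prob_space (density lborel (f i))"
  shows "PiM I (\<lambda>i. density lborel (f i)) = density (PiM I (\<lambda>_. lborel)) (\<lambda>z. \<Prod>i\<in>I. ennreal (f i (z i)))"
proof -
  define L where "L i = (if i \<in> I then density lborel (f i) else lborel)" for i
  interpret L: product_sigma_finite L
    unfolding product_sigma_finite_def L_def
    using prob by (simp add: prob_space_imp_sigma_finite sigma_finite_lborel)
  interpret lborel: product_sigma_finite "\<lambda>_::'i. lborel::real measure"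
    unfolding product_sigma_finite_def by (simp add: sigma_finite_lborel)
  have "PiM I (\<lambda>i. density lborel (f i)) = PiM I L"
    by (rule PiM_cong) (simp_all add: L_def)
  also have "\<dots> = density (PiM I (\<lambda>_. lborel)) (\<lambda>z. \<Prod>i\<in>I. ennreal (f i (z i)))"
  proof (rule L.PiM_eqI[OF fin, symmetric])
    show "sets (density (PiM I (\<lambda>_. lborel)) (\<lambda>z. \<Prod>i\<in>I. ennreal (f i (z i)))) = sets (PiM I L)"
      unfolding sets_density by (rule sets_PiM_cong) (simp_all add: L_def)
    fix A assume "\<And>i. i \<in> I \<Longrightarrow> A i \<in> sets (L i)"
    then have A[measurable]: "\<And>i. i \<in> I \<Longrightarrow> A i \<in> sets borel" by (simp add: L_def)
    have "emeasure (density (PiM I (\<lambda>_. lborel)) (\<lambda>z. \<Prod>i\<in>I. ennreal (f i (z i)))) (\<Pi>\<^sub>E i\<in>I. A i)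
        = (\<integral>\<^sup>+z. (\<Prod>i\<in>I. ennreal (f i (z i))) * indicator (\<Pi>\<^sub>E i\<in>I. A i) z \<partial>PiM I (\<lambda>_. lborel))"
      using fin A by (intro emeasure_density sets_PiM_I_finite) auto
    also have "\<dots> = (\<integral>\<^sup>+z. (\<Prod>i\<in>I. ennreal (f i (z i)) * indicator (A i) (z i)) \<partial>PiM I (\<lambda>_. lborel))"
      using fin by (intro nn_integral_cong)
        (simp add: space_PiM indicator_PiE_eq_prod prod.distrib)
    also have "\<dots> = (\<Prod>i\<in>I. \<integral>\<^sup>+x. ennreal (f i x) * indicator (A i) x \<partial>lborel)"
      using fin A by (intro lborel.product_nn_integral_prod) auto
    also have "\<dots> = (\<Prod>i\<in>I. emeasure (L i) (A i))"
      using A by (intro prod.cong refl) (simp add: emeasure_density L_def)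
    finally show "emeasure (density (PiM I (\<lambda>_. lborel)) (\<lambda>z. \<Prod>i\<in>I. ennreal (f i (z i)))) (\<Pi>\<^sub>E i\<in>I. A i)
        = (\<Prod>i\<in>I. emeasure (L i) (A i))" .
  qed
  finally show ?thesis .
qed

lemma sets_PiM_lborel_orthants:
  assumes fin: "finite I"
  shows "sets (PiM I (\<lambda>_. lborel::real measure))
       = sigma_sets (\<Pi>\<^sub>E i\<in>I. UNIV) (range (\<lambda>a. \<Pi>\<^sub>E i\<in>I. {a i<..}))"
proof -
  let ?G = "{{f\<in>(\<Pi>\<^sub>E i\<in>I. UNIV). \<forall>i\<in>j. f i \<in> A i} | A j. j \<in> {I} \<and> A \<in> Pi j (\<lambda>_. range greaterThan)}"
  have "sets (PiM I (\<lambda>_. lborel::real measure)) = sets (PiM I (\<lambda>_. sigma (UNIV::real set) (range greaterThan)))"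
    by (rule sets_PiM_cong) (simp_all add: borel_Ioi[symmetric])
  also have "\<dots> = sets (sigma (\<Pi>\<^sub>E i\<in>I. UNIV) ?G)"
  proof (rule sets_PiM_sigma)
    show "\<exists>S\<subseteq>range greaterThan. countable S \<and> (UNIV::real set) = \<Union>S" for i :: 'a
    proof (intro exI[of _ "range (\<lambda>k::nat. {- real k<..})"] conjI)
      show "(UNIV::real set) = \<Union>(range (\<lambda>k::nat. {- real k<..}))"
      proof safe
        fix x :: real
        obtain k :: nat where "- x < real k" using reals_Archimedean2 by blast
        then show "x \<in> \<Union>(range (\<lambda>k::nat. {- real k<..}))" by (auto intro!: exI[of _ k])
      qed auto
    qed auto
  qed (use fin in auto)
  also have "\<dots> = sigma_sets (\<Pi>\<^sub>E i\<in>I. UNIV) ?G"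
    by (rule sets_measure_of) auto
  also have "?G = range (\<lambda>a. \<Pi>\<^sub>E i\<in>I. {a i<..})"
  proof (intro equalityI subsetI)
    fix X assume "X \<in> ?G"
    then obtain A where A: "A \<in> Pi I (\<lambda>_. range greaterThan)" and X: "X = {f\<in>\<Pi>\<^sub>E i\<in>I. UNIV. \<forall>i\<in>I. f i \<in> A i}"
      by auto
    then have "\<forall>i\<in>I. \<exists>c. A i = {c<..}" by (auto simp: Pi_iff image_iff)
    then obtain a where "\<forall>i\<in>I. A i = {a i<..}" by (metis bchoice)
    then have "X = (\<Pi>\<^sub>E i\<in>I. {a i<..})" unfolding X by (auto simp: PiE_def)
    then show "X \<in> range (\<lambda>a. \<Pi>\<^sub>E i\<in>I. {a i<..})" by simp
  next
    fix X assume "X \<in> range (\<lambda>a. \<Pi>\<^sub>E i\<in>I. {a i<..})"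
    then obtain a where "X = (\<Pi>\<^sub>E i\<in>I. {a i<..})" by auto
    then show "X \<in> ?G"
      by (intro CollectI exI[of _ "\<lambda>i. {a i<..}"] exI[of _ I]) (auto simp: PiE_def)
  qed
  finally show ?thesis .
qed

lemma PiM_lborel_measure_eqI_orthants:
  fixes M N :: "('i \<Rightarrow> real) measure"
  assumes fin: "finite I"
    and sets: "sets M = sets (PiM I (\<lambda>_. lborel))" "sets N = sets (PiM I (\<lambda>_. lborel))"
    and "finite_measure M"
    and eq: "\<And>a. emeasure M (\<Pi>\<^sub>E i\<in>I. {a i<..}) = emeasure N (\<Pi>\<^sub>E i\<in>I. {a i<..})"
  shows "M = N"
proof -
  let ?O = "\<lambda>a :: 'i \<Rightarrow> real. \<Pi>\<^sub>E i\<in>I. {a i<..}"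
  have inter: "?O a \<inter> ?O b = ?O (\<lambda>i. max (a i) (b i))" for a b
    by (simp add: PiE_Int, intro PiE_cong) (auto simp: max_less_iff_conj)
  have stable: "Int_stable (range ?O)"
    by (rule Int_stableI_image) (metis UNIV_I inter)
  have cover: "(\<Union>k. ?O (\<lambda>_. - real k)) = (\<Pi>\<^sub>E i\<in>I. UNIV)"
  proof (intro equalityI subsetI)
    fix f :: "'i \<Rightarrow> real" assume f: "f \<in> (\<Pi>\<^sub>E i\<in>I. UNIV)"
    obtain k :: nat where k: "Max (insert 0 ((\<lambda>i. - f i) ` I)) < real k"
      using reals_Archimedean2 by blast
    have "- real k < f i" if "i \<in> I" for i
      using Max_ge[of "insert 0 ((\<lambda>i. - f i) ` I)" "- f i"] fin that k by auto
    then show "f \<in> (\<Union>k. ?O (\<lambda>_. - real k))"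
      using f by (auto simp: PiE_iff)
  qed (auto simp: PiE_iff)
  show ?thesis
  proof (rule measure_eqI_generator_eq[OF stable _ _ _ _ _ cover])
    show "range ?O \<subseteq> Pow (\<Pi>\<^sub>E i\<in>I. UNIV)" by auto
    show "sets M = sigma_sets (\<Pi>\<^sub>E i\<in>I. UNIV) (range ?O)" "sets N = sigma_sets (\<Pi>\<^sub>E i\<in>I. UNIV) (range ?O)"
      using sets sets_PiM_lborel_orthants[OF fin] by simp_all
    show "range (\<lambda>k. ?O (\<lambda>_. - real k)) \<subseteq> range ?O" by auto
    show "emeasure M (?O (\<lambda>_. - real k)) \<noteq> \<infinity>" for k
      using \<open>finite_measure M\<close> by (simp add: finite_measure.emeasure_finite)
    show "emeasure M X = emeasure N X" if "X \<in> range ?O" for X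
      using that eq by auto
  qed
qed

lemma emeasure_distr_restrict_orthant:
  fixes X :: "'i \<Rightarrow> 'a \<Rightarrow> real"
  assumes "finite I" and X: "\<And>i. i \<in> I \<Longrightarrow> X i \<in> borel_measurable M"
  shows "emeasure (distr M (PiM I (\<lambda>_. lborel)) (\<lambda>\<omega>. \<lambda>i\<in>I. X i \<omega>)) (\<Pi>\<^sub>E i\<in>I. {a i<..})
       = emeasure M {\<omega> \<in> space M. \<forall>i\<in>I. a i < X i \<omega>}"
proof -
  have "(\<lambda>\<omega>. \<lambda>i\<in>I. X i \<omega>) \<in> measurable M (PiM I (\<lambda>_. lborel))"
    using X by (intro measurable_restrict) simp
  moreover have "(\<Pi>\<^sub>E i\<in>I. {a i<..}) \<in> sets (PiM I (\<lambda>_. lborel))"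
    using assms by (intro sets_PiM_I_finite) auto
  moreover have "(\<lambda>i\<in>I. X i \<omega>) \<in> (\<Pi>\<^sub>E i\<in>I. {a i<..}) \<longleftrightarrow> (\<forall>i\<in>I. a i < X i \<omega>)" for \<omega>
    by (simp only: restrict_PiE_iff greaterThan_iff)
  then have "(\<lambda>\<omega>. \<lambda>i\<in>I. X i \<omega>) -` (\<Pi>\<^sub>E i\<in>I. {a i<..}) \<inter> space M = {\<omega> \<in> space M. \<forall>i\<in>I. a i < X i \<omega>}"
    by blast
  ultimately show ?thesis
    by (simp add: emeasure_distr)
qed

lemma distr_density_sum:
  fixes f :: "'b \<Rightarrow> 'a \<Rightarrow> ennreal" and g :: "'b \<Rightarrow> 'c \<Rightarrow> ennreal" and w :: "'b \<Rightarrow> ennreal"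
  assumes fin: "finite G" and h[measurable]: "h \<in> measurable M N"
    and f[measurable]: "\<And>\<nu>. \<nu> \<in> G \<Longrightarrow> f \<nu> \<in> borel_measurable M"
    and g[measurable]: "\<And>\<nu>. \<nu> \<in> G \<Longrightarrow> g \<nu> \<in> borel_measurable N"
    and eq: "\<And>\<nu>. \<nu> \<in> G \<Longrightarrow> distr (density M (f \<nu>)) N h = density N (g \<nu>)"
  shows "distr (density M (\<lambda>z. \<Sum>\<nu>\<in>G. w \<nu> * f \<nu> z)) N h = density N (\<lambda>x. \<Sum>\<nu>\<in>G. w \<nu> * g \<nu> x)"
proof (rule measure_eqI)
  fix A assume "A \<in> sets (distr (density M (\<lambda>z. \<Sum>\<nu>\<in>G. w \<nu> * f \<nu> z)) N h)"
  then have A[measurable]: "A \<in> sets N" by simp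
  let ?B = "h -` A \<inter> space M"
  have B[measurable]: "?B \<in> sets M" by measurable
  have "emeasure (distr (density M (\<lambda>z. \<Sum>\<nu>\<in>G. w \<nu> * f \<nu> z)) N h) A
      = (\<integral>\<^sup>+z. (\<Sum>\<nu>\<in>G. w \<nu> * (f \<nu> z * indicator ?B z)) \<partial>M)"
    using fin by (simp add: emeasure_distr emeasure_density sum_distrib_right mult.assoc)
  also have "\<dots> = (\<Sum>\<nu>\<in>G. w \<nu> * emeasure (distr (density M (f \<nu>)) N h) A)"
    using fin by (simp add: nn_integral_sum nn_integral_cmult emeasure_distr emeasure_density)
  also have "\<dots> = (\<Sum>\<nu>\<in>G. w \<nu> * emeasure (density N (g \<nu>)) A)"
    by (simp add: eq)
  also have "\<dots> = (\<integral>\<^sup>+x. (\<Sum>\<nu>\<in>G. w \<nu> * (g \<nu> x * indicator A x)) \<partial>N)"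
    using fin by (simp add: nn_integral_sum nn_integral_cmult emeasure_density)
  also have "\<dots> = emeasure (density N (\<lambda>x. \<Sum>\<nu>\<in>G. w \<nu> * g \<nu> x)) A"
    using fin by (simp add: emeasure_density sum_distrib_right mult.assoc)
  finally show "emeasure (distr (density M (\<lambda>z. \<Sum>\<nu>\<in>G. w \<nu> * f \<nu> z)) N h) A
      = emeasure (density N (\<lambda>x. \<Sum>\<nu>\<in>G. w \<nu> * g \<nu> x)) A" .
qed simp

lemma distr_sum_PiM_insert:
  fixes g :: "'i \<Rightarrow> real \<Rightarrow> ennreal"
  assumes fin: "finite I" and i: "i \<notin> I"
    and g[measurable]: "\<And>j. g j \<in> borel_measurable borel"
    and prob: "\<And>j. j \<in> insert i I \<Longrightarrow> prob_space (density lborel (g j))"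
  shows "distr (PiM (insert i I) (\<lambda>j. density lborel (g j))) lborel (\<lambda>z. \<Sum>j\<in>insert i I. z j)
       = convolution (density lborel (g i))
           (distr (PiM I (\<lambda>j. density lborel (g j))) lborel (\<lambda>z. \<Sum>j\<in>I. z j))"
proof -
  let ?L = "\<lambda>j. density lborel (g j)"
  let ?S = "distr (PiM I ?L) lborel (\<lambda>X. \<Sum>j\<in>I. X j)"
  have "distr (PiM (insert i I) ?L) lborel (\<lambda>z. \<Sum>j\<in>insert i I. z j)
      = distr (distr (?L i \<Otimes>\<^sub>M PiM I ?L) (PiM (insert i I) ?L) (\<lambda>(x, X). X(i := x))) lborel
          (\<lambda>z. \<Sum>j\<in>insert i I. z j)"
    using distr_pair_PiM_eq_PiM[of I ?L i] prob by simp
  also have "\<dots> = distr (?L i \<Otimes>\<^sub>M PiM I ?L) borel (\<lambda>(x, X). x + (\<Sum>j\<in>I. X j))"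
  proof -
    have "(\<Sum>j\<in>insert i I. (X(i := x)) j) = x + (\<Sum>j\<in>I. X j)" for x X
    proof -
      have "(\<Sum>j\<in>I. (X(i := x)) j) = (\<Sum>j\<in>I. X j)"
        using i by (intro sum.cong) auto
      then show ?thesis by (simp only: sum.insert[OF fin i] fun_upd_same)
    qed
    then show ?thesis
      by (subst distr_distr) (auto simp: comp_def case_prod_beta' intro!: distr_cong)
  qed
  also have "\<dots> = distr (distr (?L i \<Otimes>\<^sub>M PiM I ?L) (?L i \<Otimes>\<^sub>M lborel) (\<lambda>(x, X). (x, \<Sum>j\<in>I. X j)))
      borel (\<lambda>(x, y). x + y)"
    by (subst distr_distr) (auto simp: comp_def case_prod_beta')
  also have "distr (?L i \<Otimes>\<^sub>M PiM I ?L) (?L i \<Otimes>\<^sub>M lborel) (\<lambda>(x, X). (x, \<Sum>j\<in>I. X j))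
      = distr (?L i) (?L i) (\<lambda>x. x) \<Otimes>\<^sub>M ?S"
  proof (rule pair_measure_distr[symmetric])
    have "prob_space (PiM I ?L)" using prob by (intro prob_space_PiM) auto
    then have "prob_space ?S" by (intro prob_space.prob_space_distr) auto
    then show "sigma_finite_measure ?S"
      by (simp add: prob_space_def finite_measure_def)
  qed simp_all
  finally show ?thesis unfolding convolution_def by simp
qed

lemma (in prob_space) AE_exponential_pos:
  assumes "distributed M lborel X (exponential_density l)"
  shows "AE \<omega> in M. 0 < X \<omega>"
proof -
  have "AE x in distr M lborel X. 0 < x"
    unfolding distributed_distr_eq_density[OF assms] using AE_lborel_singleton[of 0]
    by (subst AE_density) (auto elim!: eventually_mono simp: exponential_density_def)
  then show ?thesis
    using distributed_measurable[OF assms] by (subst (asm) AE_distr_iff) auto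
qed

section \<open>Mixtures of Erlang densities\<close>

definition erlang_shape_density :: "real \<Rightarrow> nat \<Rightarrow> real \<Rightarrow> real" where
  "erlang_shape_density c l x = (if l = 0 then 0 else erlang_density (l - 1) c x)"

definition erlang_mixture :: "real \<Rightarrow> nat pmf \<Rightarrow> real \<Rightarrow> ennreal" where
  "erlang_mixture c p x = (\<integral>\<^sup>+ l. ennreal (erlang_shape_density c l x) \<partial>measure_pmf p)"

definition add_pmf :: "nat pmf \<Rightarrow> nat pmf \<Rightarrow> nat pmf" where
  "add_pmf p q = map_pmf (\<lambda>(a, b). a + b) (pair_pmf p q)"

lemma erlang_shape_density_nonneg: "0 \<le> c \<Longrightarrow> 0 \<le> erlang_shape_density c l x"
  by (simp add: erlang_shape_density_def)

lemma borel_measurable_erlang_shape_density[measurable]: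
  "erlang_shape_density c l \<in> borel_measurable borel"
  unfolding erlang_shape_density_def by (cases "l = 0") auto

lemma erlang_mixture_suminf:
  "erlang_mixture c p x = (\<Sum>l. ennreal (pmf p l) * ennreal (erlang_shape_density c l x))"
  unfolding erlang_mixture_def nn_integral_measure_pmf nn_integral_count_space_nat ..

lemma borel_measurable_erlang_mixture[measurable]: "erlang_mixture c p \<in> borel_measurable borel"
  unfolding erlang_mixture_suminf[abs_def] by measurable

lemma erlang_shape_density_Gamma:
  assumes "1 \<le> l"
  shows "erlang_shape_density c l x
       = (if x < 0 then 0 else exp (- c * x) * x ^ (l - 1) * c ^ l / Gamma (real l))"
proof -
  have l: "l = Suc (l - 1)" using assms by simp
  have "Gamma (real l) = fact (l - 1)"
    using Gamma_fact[of "l - 1"] assms by (simp add: of_nat_diff)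
  moreover have "c ^ l = c * c ^ (l - 1)"
    by (subst l) simp
  ultimately show ?thesis
    using assms unfolding erlang_shape_density_def erlang_density_def by (simp add: field_simps)
qed

lemma summable_erlang_shape_density:
  assumes "1 \<le> l"
  shows "summable (\<lambda>k. erlang_shape_density c (k + l) x)"
proof (cases "x < 0")
  case False
  have kl: "k + l - 1 = k + (l - 1)" "k + l = Suc (k + (l - 1))" for k
    using assms by auto
  have "summable (\<lambda>j. (c * x) ^ j / fact j)"
    using summable_exp_generic[of "c * x"] by (simp add: divide_inverse mult.commute)
  then have "summable (\<lambda>k. (c * x) ^ (k + (l - 1)) / fact (k + (l - 1)))"
    by (subst summable_iff_shift)
  then have "summable (\<lambda>k. c * exp (- c * x) * ((c * x) ^ (k + (l - 1)) / fact (k + (l - 1))))"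
    by (rule summable_mult)
  moreover have "erlang_shape_density c (k + l) x = c * exp (- c * x) * ((c * x) ^ (k + (l - 1)) / fact (k + (l - 1)))" for k
    using False unfolding erlang_shape_density_def erlang_density_def kl by (simp add: power_mult_distrib field_simps)
  ultimately show ?thesis by simp
next
  case True
  then have "erlang_shape_density c (k + l) x = 0" for k
    by (simp add: erlang_shape_density_def erlang_density_def)
  then show ?thesis by simp
qed

lemma prob_space_erlang_mixture:
  assumes c: "0 < c" and p0: "pmf p 0 = 0"
  shows "prob_space (density lborel (erlang_mixture c p))"
proof
  have shape: "(\<integral>\<^sup>+x. ennreal (erlang_shape_density c l x) \<partial>lborel) = (if l = 0 then 0 else 1)" for l
  proof (cases "l = 0")
    case False
    then have "(\<integral>\<^sup>+x. ennreal (erlang_shape_density c l x) \<partial>lborel)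
        = emeasure (density lborel (erlang_density (l - 1) c)) UNIV"
      by (simp add: erlang_shape_density_def emeasure_density)
    then show ?thesis
      using prob_space.emeasure_space_1[OF prob_space_erlang_density[OF c]] False by simp
  qed (simp add: erlang_shape_density_def)
  have "emeasure (density lborel (erlang_mixture c p)) UNIV
      = (\<Sum>l. \<integral>\<^sup>+x. ennreal (pmf p l) * ennreal (erlang_shape_density c l x) \<partial>lborel)"
    by (simp add: emeasure_density erlang_mixture_suminf nn_integral_suminf)
  also have "\<dots> = (\<Sum>l. ennreal (pmf p l))"
    using p0 by (intro suminf_cong) (simp add: nn_integral_cmult shape)
  also have "\<dots> = 1"
    using nn_integral_measure_pmf[of p "\<lambda>_. 1"] by (simp add: nn_integral_count_space_nat)
  finally show "emeasure (density lborel (erlang_mixture c p)) (space (density lborel (erlang_mixture c p))) = 1"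
    by simp
qed

lemma convolution_erlang_shape_density:
  assumes "0 < c" "0 < a" "0 < b"
  shows "(\<integral>\<^sup>+y. ennreal (erlang_shape_density c a (x - y)) * ennreal (erlang_shape_density c b y) \<partial>lborel)
       = ennreal (erlang_shape_density c (a + b) x)"
  using convolution_erlang_density[OF assms(1), of "a - 1" "b - 1"] assms
  by (simp add: erlang_shape_density_def fun_eq_iff)

lemma convolution_erlang_mixture_density:
  assumes c: "0 < c" and p0: "pmf p 0 = 0" and q0: "pmf q 0 = 0"
  shows "(\<integral>\<^sup>+y. erlang_mixture c p (x - y) * erlang_mixture c q y \<partial>lborel)
       = erlang_mixture c (add_pmf p q) x"
proof -
  let ?e = "\<lambda>l y. ennreal (erlang_shape_density c l y)"
  have "(\<integral>\<^sup>+y. erlang_mixture c p (x - y) * erlang_mixture c q y \<partial>lborel)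
      = (\<integral>\<^sup>+y. (\<Sum>a. \<Sum>b. ennreal (pmf p a) * ennreal (pmf q b) * (?e a (x - y) * ?e b y)) \<partial>lborel)"
  proof (intro nn_integral_cong)
    fix y
    have "erlang_mixture c p (x - y) * erlang_mixture c q y
        = (\<Sum>a. ennreal (pmf p a) * ?e a (x - y) * erlang_mixture c q y)"
      unfolding erlang_mixture_suminf[of c p] by (rule ennreal_suminf_multc[symmetric])
    also have "\<dots> = (\<Sum>a. \<Sum>b. ennreal (pmf p a) * ?e a (x - y) * (ennreal (pmf q b) * ?e b y))"
      unfolding erlang_mixture_suminf[of c q] ennreal_suminf_cmult[symmetric] ..
    finally show "erlang_mixture c p (x - y) * erlang_mixture c q y
        = (\<Sum>a. \<Sum>b. ennreal (pmf p a) * ennreal (pmf q b) * (?e a (x - y) * ?e b y))"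
      by (simp only: mult_ac)
  qed
  also have "\<dots> = (\<Sum>a. \<Sum>b. \<integral>\<^sup>+y. ennreal (pmf p a) * ennreal (pmf q b) * (?e a (x - y) * ?e b y) \<partial>lborel)"
    by (subst nn_integral_suminf; (subst nn_integral_suminf)?) auto
  also have "\<dots> = (\<Sum>a. \<Sum>b. ennreal (pmf p a) * (ennreal (pmf q b) * ?e (a + b) x))"
  proof (intro suminf_cong)
    fix a b
    show "(\<integral>\<^sup>+y. ennreal (pmf p a) * ennreal (pmf q b) * (?e a (x - y) * ?e b y) \<partial>lborel)
       = ennreal (pmf p a) * (ennreal (pmf q b) * ?e (a + b) x)"
    proof (cases "a = 0 \<or> b = 0")
      case False
      then show ?thesis using c
        by (subst nn_integral_cmult) (auto simp: convolution_erlang_shape_density mult.assoc)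
    qed (use p0 q0 in auto)
  qed
  also have "\<dots> = (\<integral>\<^sup>+a. \<integral>\<^sup>+b. ?e (a + b) x \<partial>q \<partial>p)"
    by (simp only: ennreal_suminf_cmult nn_integral_measure_pmf nn_integral_count_space_nat)
  also have "\<dots> = erlang_mixture c (add_pmf p q) x"
    unfolding erlang_mixture_def add_pmf_def nn_integral_map_pmf nn_integral_pair_pmf' by simp
  finally show ?thesis .
qed

lemma pmf_add_pmf_0:
  assumes "pmf p 0 = 0"
  shows "pmf (add_pmf p q) 0 = 0"
proof -
  have "0 \<notin> set_pmf p" using assms by (simp add: set_pmf_eq)
  then have "0 \<notin> set_pmf (add_pmf p q)" unfolding add_pmf_def by auto
  then show ?thesis by (simp add: set_pmf_eq)
qed

lemma convolution_erlang_mixture: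
  assumes c: "0 < c" and p0: "pmf p 0 = 0" and q0: "pmf q 0 = 0"
  shows "convolution (density lborel (erlang_mixture c p)) (density lborel (erlang_mixture c q))
       = density lborel (erlang_mixture c (add_pmf p q))"
  using convolution_density[of "erlang_mixture c p" "erlang_mixture c q"]
    prob_space_erlang_mixture[OF c p0] prob_space_erlang_mixture[OF c q0]
  by (simp add: prob_space_def convolution_erlang_mixture_density[OF assms])

lemma pmf_shifted_geometric_0: "pmf (shifted_geometric_pmf p) 0 = 0"
  unfolding shifted_geometric_pmf_def by (simp add: pmf_eq_0_set_pmf)

lemma erlang_mixture_shifted_geometric:
  assumes c: "0 < c" and p: "0 < p" "p \<le> 1"
  shows "erlang_mixture c (shifted_geometric_pmf p) x = ennreal (exponential_density (p * c) x)"
proof (cases "x < 0")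
  case True
  then show ?thesis
    by (simp add: erlang_mixture_def shifted_geometric_pmf_def erlang_shape_density_def
        erlang_density_def exponential_density_def)
next
  case False
  let ?t = "\<lambda>k. (1 - p) ^ k * p * erlang_density k c x"
  have t: "?t k = (p * c * exp (- c * x)) * (((1 - p) * c * x) ^ k /\<^sub>R fact k)" for k
    using False by (simp add: erlang_density_def power_mult_distrib divide_simps)
  have "?t sums ((p * c * exp (- c * x)) * exp ((1 - p) * c * x))"
    unfolding t by (intro sums_mult exp_converges)
  also have "(p * c * exp (- c * x)) * exp ((1 - p) * c * x) = exponential_density (p * c) x"
    using False by (simp add: exponential_density_def exp_add[symmetric] algebra_simps)
  finally have sums: "?t sums exponential_density (p * c) x" .
  have "erlang_mixture c (shifted_geometric_pmf p) x
      = (\<integral>\<^sup>+k. ennreal (erlang_density k c x) \<partial>measure_pmf (geometric_pmf p))"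
    unfolding erlang_mixture_def shifted_geometric_pmf_def by (simp add: erlang_shape_density_def)
  also have "\<dots> = (\<Sum>k. ennreal ((1 - p) ^ k * p) * ennreal (erlang_density k c x))"
    using p by (simp add: nn_integral_measure_pmf nn_integral_count_space_nat)
  also have "\<dots> = (\<Sum>k. ennreal (?t k))"
    using p c by (intro suminf_cong) (simp add: ennreal_mult[symmetric] erlang_density_nonneg)
  also have "\<dots> = ennreal (exponential_density (p * c) x)"
    using p c False by (intro suminf_ennreal_eq[OF _ sums]) (simp add: erlang_density_def)
  finally show ?thesis .
qed

lemma erlang_mixture_eq_Gamma_series:
  assumes n: "2 \<le> n" and c: "0 < c" and p: "\<And>l. l < n \<Longrightarrow> pmf p l = 0"
  shows "erlang_mixture c p x = ennreal (if 0 < x then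
           (\<Sum>k. pmf p (k + n) * exp (- c * x) * x ^ (k + n - 1) * c ^ (k + n) / Gamma (real (k + n)))
         else 0)"
proof -
  let ?e = "\<lambda>k. erlang_shape_density c (k + n) x"
  have "erlang_mixture c p x
      = (\<Sum>k. ennreal (pmf p (k + n)) * ennreal (?e k)) + (\<Sum>l<n. ennreal (pmf p l) * ennreal (erlang_shape_density c l x))"
    unfolding erlang_mixture_suminf by (rule suminf_offset) (rule summableI)
  also have "\<dots> = (\<Sum>k. ennreal (pmf p (k + n) * ?e k))"
    using p c by (simp add: ennreal_mult erlang_shape_density_nonneg)
  also have "\<dots> = ennreal (\<Sum>k. pmf p (k + n) * ?e k)"
  proof (rule suminf_ennreal2)
    show "0 \<le> pmf p (k + n) * ?e k" for k
      using c by (simp add: erlang_shape_density_nonneg)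
    show "summable (\<lambda>k. pmf p (k + n) * ?e k)"
    proof (rule summable_comparison_test'[OF summable_erlang_shape_density])
      show "norm (pmf p (k + n) * ?e k) \<le> ?e k" for k
        using c by (auto simp: erlang_shape_density_nonneg pmf_le_1 intro: mult_left_le_one_le)
    qed (use n in simp)
  qed
  also have "(\<lambda>k. pmf p (k + n) * ?e k) = (\<lambda>k. if x < 0 then 0 else
      pmf p (k + n) * exp (- c * x) * x ^ (k + n - 1) * c ^ (k + n) / Gamma (real (k + n)))"
    using n by (simp add: erlang_shape_density_Gamma fun_eq_iff)
  finally show ?thesis
    using n by (cases "x = 0") (auto simp: power_0_left)
qed

section \<open>Sums of independent counts\<close>

definition sum_pmf :: "'i set \<Rightarrow> ('i \<Rightarrow> nat pmf) \<Rightarrow> nat pmf" where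
  "sum_pmf J P = map_pmf (\<lambda>d. \<Sum>x\<in>J. d x) (Pi_pmf J 0 P)"

lemma sum_pmf_empty: "sum_pmf {} P = return_pmf 0"
  unfolding sum_pmf_def by (simp add: map_pmf_const)

lemma sum_pmf_singleton: "sum_pmf {x} P = P x"
  unfolding sum_pmf_def Pi_pmf_singleton map_pmf_comp by simp

lemma sum_pmf_union:
  assumes "finite A" "finite B" "A \<inter> B = {}"
  shows "sum_pmf (A \<union> B) P = add_pmf (sum_pmf A P) (sum_pmf B P)"
proof -
  let ?glue = "\<lambda>(f, g) x. if x \<in> A then f x else g x"
  have sum_glue: "(\<Sum>x\<in>A \<union> B. if x \<in> A then f x else g x) = (\<Sum>x\<in>A. f x) + (\<Sum>x\<in>B. g x)"
    for f g :: "_ \<Rightarrow> nat"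
  proof -
    have "(\<Sum>x\<in>A \<union> B. if x \<in> A then f x else g x)
        = (\<Sum>x\<in>A. if x \<in> A then f x else g x) + (\<Sum>x\<in>B. if x \<in> A then f x else g x)"
      using assms by (intro sum.union_disjoint) auto
    also have "\<dots> = (\<Sum>x\<in>A. f x) + (\<Sum>x\<in>B. g x)"
      using assms by (auto intro!: sum.cong)
    finally show ?thesis .
  qed
  have "sum_pmf (A \<union> B) P
      = map_pmf (\<lambda>d. \<Sum>x\<in>A \<union> B. d x) (map_pmf ?glue (pair_pmf (Pi_pmf A 0 P) (Pi_pmf B 0 P)))"
    unfolding sum_pmf_def using assms by (subst Pi_pmf_union) auto
  also have "\<dots> = map_pmf (\<lambda>(f, g). (\<Sum>x\<in>A. f x) + (\<Sum>x\<in>B. g x)) (pair_pmf (Pi_pmf A 0 P) (Pi_pmf B 0 P))"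
    unfolding map_pmf_comp by (intro map_pmf_cong refl) (auto simp: sum_glue)
  also have "\<dots> = add_pmf (sum_pmf A P) (sum_pmf B P)"
    unfolding add_pmf_def sum_pmf_def map_pair[symmetric] map_pmf_comp by (simp add: case_prod_beta')
  finally show ?thesis .
qed

lemma sum_pmf_insert:
  assumes "finite J" "x \<notin> J"
  shows "sum_pmf (insert x J) P = add_pmf (P x) (sum_pmf J P)"
  using sum_pmf_union[of "{x}" J P] assms by (simp add: sum_pmf_singleton)

lemma sum_pmf_reindex:
  assumes "finite J" "inj_on f J"
  shows "sum_pmf (f ` J) Q = sum_pmf J (\<lambda>x. Q (f x))"
  using assms
proof (induction J rule: finite_induct)
  case (insert x F)
  then have "f x \<notin> f ` F" by auto
  then show ?case using insert by (simp add: sum_pmf_insert)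
qed (simp add: sum_pmf_empty)

lemma sum_pmf_UN:
  assumes "finite I" "\<And>i. i \<in> I \<Longrightarrow> finite (J i)" "disjoint_family_on J I"
  shows "sum_pmf (\<Union>i\<in>I. J i) Q = sum_pmf I (\<lambda>i. sum_pmf (J i) Q)"
  using assms
proof (induction I rule: finite_induct)
  case (insert i I)
  then have "J i \<inter> (\<Union>j\<in>I. J j) = {}"
    unfolding disjoint_family_on_def by auto
  with insert show ?case
    by (simp add: sum_pmf_union sum_pmf_insert disjoint_family_on_insert)
qed (simp add: sum_pmf_empty)

lemma map_sum_Pi_pmf:
  assumes "finite D" "J \<subseteq> D"
  shows "map_pmf (\<lambda>d. \<Sum>x\<in>J. d x) (Pi_pmf D 0 P) = sum_pmf J P"
  unfolding sum_pmf_def using assms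
  by (subst Pi_pmf_subset[OF assms]) (auto simp: map_pmf_comp intro!: map_pmf_cong sum.cong)

lemma pmf_sum_pmf_0:
  assumes "finite J" "J \<noteq> {}" "\<And>x. x \<in> J \<Longrightarrow> pmf (Q x) 0 = 0"
  shows "pmf (sum_pmf J Q) 0 = 0"
  using assms
proof (induction J rule: finite_ne_induct)
  case (insert x F)
  then show ?case by (simp add: sum_pmf_insert pmf_add_pmf_0)
qed (simp add: sum_pmf_singleton)

lemma distr_sum_PiM_erlang_mixture:
  assumes "finite I" "I \<noteq> {}" and c: "0 < c" and p0: "\<And>i. i \<in> I \<Longrightarrow> pmf (p i) 0 = 0"
  shows "distr (PiM I (\<lambda>i. density lborel (erlang_mixture c (p i)))) lborel (\<lambda>z. \<Sum>i\<in>I. z i)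
       = density lborel (erlang_mixture c (sum_pmf I p))"
  using assms(1,2) p0
proof (induction I rule: finite_ne_induct)
  case (singleton i)
  have "distr (PiM {i} (\<lambda>i. density lborel (erlang_mixture c (p i)))) lborel (\<lambda>z. \<Sum>i\<in>{i}. z i)
      = distr (PiM {i} (\<lambda>i. density lborel (erlang_mixture c (p i)))) (density lborel (erlang_mixture c (p i))) (\<lambda>z. z i)"
    by (intro distr_cong) auto
  also have "\<dots> = density lborel (erlang_mixture c (p i))"
    using singleton c by (intro distr_PiM_component prob_space_imp_sigma_finite prob_space_erlang_mixture) auto
  finally show ?case by (simp add: sum_pmf_singleton)
next
  case (insert i I)
  have "pmf (sum_pmf I p) 0 = 0"
    using insert by (intro pmf_sum_pmf_0) auto
  moreover have "distr (PiM (insert i I) (\<lambda>i. density lborel (erlang_mixture c (p i)))) lborel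
      (\<lambda>z. \<Sum>j\<in>insert i I. z j)
      = convolution (density lborel (erlang_mixture c (p i)))
          (distr (PiM I (\<lambda>i. density lborel (erlang_mixture c (p i)))) lborel (\<lambda>z. \<Sum>j\<in>I. z j))"
    using insert c by (intro distr_sum_PiM_insert prob_space_erlang_mixture) auto
  ultimately show ?case
    using insert c by (simp add: convolution_erlang_mixture sum_pmf_insert)
qed

section \<open>Tails of the Bernstein basis\<close>

definition bern_tail :: "nat \<Rightarrow> nat \<Rightarrow> real \<Rightarrow> real" where
  "bern_tail m \<nu> u = (\<Sum>k\<in>{Suc \<nu>..m}. bern_G m k u)"

lemma bern_G_Suc_DERIV:
  assumes "Suc \<nu> \<le> m"
  shows "DERIV (bern_G m (Suc \<nu>)) u :>
    real m * real ((m - 1) choose \<nu>) * u ^ \<nu> * (1 - u) ^ (m - 1 - \<nu>)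
    - real m * real ((m - 1) choose Suc \<nu>) * u ^ Suc \<nu> * (1 - u) ^ (m - 1 - Suc \<nu>)"
proof -
  let ?C = "real (m choose Suc \<nu>)"
  have up: "real (Suc \<nu>) * ?C = real m * real ((m - 1) choose \<nu>)"
    using times_binomial_minus1_eq[of "Suc \<nu>" m] by (metis diff_Suc_1 of_nat_mult zero_less_Suc)
  have down: "real (m - Suc \<nu>) * ?C = real m * real ((m - 1) choose Suc \<nu>)"
    using binomial_absorb_comp[of m "Suc \<nu>"] by (metis of_nat_mult)
  have d: "DERIV (\<lambda>u. ?C * u ^ Suc \<nu> * (1 - u) ^ (m - Suc \<nu>)) u :>
      (?C * u ^ Suc \<nu>) * (of_nat (m - Suc \<nu>) * ((0 - 1) * (1 - u) ^ (m - Suc \<nu> - Suc 0)))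
      + (?C * (of_nat (Suc \<nu>) * (1 * u ^ (Suc \<nu> - Suc 0)))) * (1 - u) ^ (m - Suc \<nu>)"
    by (intro DERIV_mult' DERIV_cmult DERIV_power DERIV_ident DERIV_diff DERIV_const)
  have "(?C * u ^ Suc \<nu>) * (of_nat (m - Suc \<nu>) * ((0 - 1) * (1 - u) ^ (m - Suc \<nu> - Suc 0)))
      + (?C * (of_nat (Suc \<nu>) * (1 * u ^ (Suc \<nu> - Suc 0)))) * (1 - u) ^ (m - Suc \<nu>)
      = (real (Suc \<nu>) * ?C) * (u ^ \<nu> * (1 - u) ^ (m - 1 - \<nu>))
      - (real (m - Suc \<nu>) * ?C) * (u ^ Suc \<nu> * (1 - u) ^ (m - 1 - Suc \<nu>))"
  proof -
    have "m - Suc \<nu> = m - 1 - \<nu>" "m - Suc \<nu> - Suc 0 = m - 1 - Suc \<nu>" by auto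
    then show ?thesis by (simp add: algebra_simps)
  qed
  from DERIV_cong[OF d this] show ?thesis
    unfolding up down bern_G_def[abs_def] by (simp add: mult.assoc)
qed

lemma bern_tail_DERIV:
  assumes "\<nu> < m"
  shows "DERIV (bern_tail m \<nu>) u :> real m * real ((m - 1) choose \<nu>) * u ^ \<nu> * (1 - u) ^ (m - 1 - \<nu>)"
proof -
  have "\<nu> \<le> m - 1" using assms by simp
  then show ?thesis
  proof (induction \<nu> rule: inc_induct)
    case base
    have m: "m = Suc (m - 1)" using assms by simp
    have "bern_tail m (m - 1) = (\<lambda>u. u ^ m)"
      by (subst (1 2) m) (simp add: bern_tail_def bern_G_def fun_eq_iff)
    moreover have "DERIV (\<lambda>u. u ^ m) u :> real m * u ^ (m - 1)"
      by (auto intro!: derivative_eq_intros)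
    ultimately show ?case by simp
  next
    case (step \<nu>)
    have "bern_tail m \<nu> = (\<lambda>u. bern_G m (Suc \<nu>) u + bern_tail m (Suc \<nu>) u)"
      using step.hyps by (simp add: bern_tail_def fun_eq_iff Icc_eq_insert_lb_nat)
    moreover have "DERIV (\<lambda>u. bern_G m (Suc \<nu>) u + bern_tail m (Suc \<nu>) u) u :>
        (real m * real ((m - 1) choose \<nu>) * u ^ \<nu> * (1 - u) ^ (m - 1 - \<nu>)
        - real m * real ((m - 1) choose Suc \<nu>) * u ^ Suc \<nu> * (1 - u) ^ (m - 1 - Suc \<nu>))
        + real m * real ((m - 1) choose Suc \<nu>) * u ^ Suc \<nu> * (1 - u) ^ (m - 1 - Suc \<nu>)"
      using step by (intro DERIV_add bern_G_Suc_DERIV) simp_all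
    ultimately show ?case by simp
  qed
qed

lemma bern_tail_0: "bern_tail m \<nu> 0 = 0"
  unfolding bern_tail_def bern_G_def by (auto intro!: sum.neutral)

lemma bern_tail_1: "\<nu> < m \<Longrightarrow> bern_tail m \<nu> 1 = 1"
  unfolding bern_tail_def bern_G_def by (subst sum.cong[OF refl, of _ _ "\<lambda>k. if k = m then 1 else 0"]) auto

lemma isCont_bern_tail: "isCont (bern_tail m \<nu>) u"
  unfolding bern_tail_def bern_G_def by (intro continuous_intros)

lemma bern_tail_nonneg: "0 \<le> u \<Longrightarrow> u \<le> 1 \<Longrightarrow> 0 \<le> bern_tail m \<nu> u"
  unfolding bern_tail_def bern_G_def by (intro sum_nonneg) auto

lemma bern_G_at_0: "bern_G m k 0 = (if k = 0 then 1 else 0)"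
  by (simp add: bern_G_def)

lemma sum_bern_G: "(\<Sum>k\<le>m. bern_G m k u) = 1"
  using binomial_ring[of u "1 - u" m] by (simp add: bern_G_def atLeast0AtMost ac_simps)

lemma bern_tail_diff:
  assumes "k \<le> m" "1 \<le> m"
  shows "(if 1 \<le> k then bern_tail m (k - 1) u else 0) + (if k < m then - bern_tail m k u else 0)
       = bern_G m k u - (if k = 0 then 1 else 0)"
proof (cases "k = 0")
  case True
  have "(\<Sum>k\<le>m. bern_G m k u) = bern_G m 0 u + bern_tail m 0 u"
    by (simp add: bern_tail_def atMost_atLeast0 sum.atLeast_Suc_atMost)
  then show ?thesis using True assms sum_bern_G[of m u] by simp
next
  case False
  then have "{Suc (k - 1)..m} = insert k {Suc k..m}" using assms by auto
  then have "bern_tail m (k - 1) u = bern_G m k u + bern_tail m k u"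
    unfolding bern_tail_def by simp
  moreover have "k = m \<Longrightarrow> bern_tail m k u = 0" by (simp add: bern_tail_def)
  ultimately show ?thesis using False assms by auto
qed

text \<open>The density of -log U for U with law Beta(\<nu> + 1, m - \<nu>).\<close>
definition bern_tail_density :: "nat \<Rightarrow> nat \<Rightarrow> real \<Rightarrow> real" where
  "bern_tail_density m \<nu> z = (if z < 0 then 0 else
     real m * real ((m - 1) choose \<nu>) * exp (- (real \<nu> + 1) * z) * (1 - exp (- z)) ^ (m - 1 - \<nu>))"

lemma bern_tail_density_nonneg: "0 \<le> bern_tail_density m \<nu> z"
  unfolding bern_tail_density_def by auto

lemma borel_measurable_bern_tail_density[measurable]: "bern_tail_density m \<nu> \<in> borel_measurable borel"
  unfolding bern_tail_density_def by measurable

lemma mult_choose_eq_mult_choose_pred: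
  assumes "1 \<le> k"
  shows "k * (n choose k) = (n - (k - 1)) * (n choose (k - 1))"
  using times_binomial_minus1_eq[of k n] binomial_absorb_comp[of n "k - 1"] assms by simp

lemma nn_integral_exp_mult_one_minus_exp_power:
  assumes "0 \<le> x"
  shows "(\<integral>\<^sup>+y. ennreal (exp (- y) * (1 - exp (- y)) ^ r * indicator {0..x} y) \<partial>lborel)
       = ennreal ((1 - exp (- x)) ^ Suc r / real (Suc r))"
proof -
  have "(\<integral>\<^sup>+y. ennreal (exp (- y) * (1 - exp (- y)) ^ r * indicator {0..x} y) \<partial>lborel)
      = ennreal ((1 - exp (- x)) ^ Suc r / real (Suc r) - (1 - exp (- 0)) ^ Suc r / real (Suc r))"
  proof (rule nn_integral_FTC_Icc)
    fix y :: real
    have "DERIV (\<lambda>y. (1 - exp (- y)) ^ Suc r / real (Suc r)) y :>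
        of_nat (Suc r) * (exp (- y) * (1 - exp (- y)) ^ (Suc r - Suc 0)) / real (Suc r)"
      by (intro DERIV_cdivide DERIV_power) (auto intro!: derivative_eq_intros)
    then show "DERIV (\<lambda>y. (1 - exp (- y)) ^ Suc r / real (Suc r)) y :> exp (- y) * (1 - exp (- y)) ^ r"
      by (rule DERIV_cong) (simp del: of_nat_Suc)
  qed (use assms in \<open>auto intro!: continuous_intros\<close>)
  then show ?thesis by simp
qed

lemma exponential_density_mult_bern_tail_density:
  "exponential_density (real \<nu>) (x - y) * bern_tail_density m \<nu> y
     = real \<nu> * real m * real ((m - 1) choose \<nu>) * exp (- real \<nu> * x)
       * (exp (- y) * (1 - exp (- y)) ^ (m - 1 - \<nu>) * indicator {0..x} y)"
proof (cases "0 \<le> y \<and> y \<le> x")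
  case True
  have "exp (- (x - y) * real \<nu>) * exp (- (real \<nu> + 1) * y) = exp (- real \<nu> * x) * exp (- y)"
    by (simp add: exp_add[symmetric] algebra_simps)
  then show ?thesis
    using True by (simp add: exponential_density_def bern_tail_density_def mult_ac)
qed (auto simp: bern_tail_density_def exponential_density_def)

lemma convolution_exponential_bern_tail_density:
  assumes \<nu>: "1 \<le> \<nu>" "\<nu> < m"
  shows "(\<integral>\<^sup>+y. ennreal (exponential_density (real \<nu>) (x - y)) * ennreal (bern_tail_density m \<nu> y) \<partial>lborel)
       = ennreal (bern_tail_density m (\<nu> - 1) x)"
proof (cases "x < 0")
  case True
  then have "(\<integral>\<^sup>+y. ennreal (exponential_density (real \<nu>) (x - y)) * ennreal (bern_tail_density m \<nu> y) \<partial>lborel)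
      = (\<integral>\<^sup>+(y::real). 0 \<partial>lborel)"
    by (intro nn_integral_cong) (auto simp: bern_tail_density_def exponential_density_def)
  then show ?thesis using True by (simp add: bern_tail_density_def)
next
  case False
  define r where "r = m - 1 - \<nu>"
  define K where "K = real \<nu> * real m * real ((m - 1) choose \<nu>) * exp (- real \<nu> * x)"
  have K: "0 \<le> K" unfolding K_def by simp
  have "ennreal (exponential_density (real \<nu>) (x - y)) * ennreal (bern_tail_density m \<nu> y)
      = ennreal (K * (exp (- y) * (1 - exp (- y)) ^ r * indicator {0..x} y))" for y
    unfolding K_def r_def exponential_density_mult_bern_tail_density[symmetric]
    using \<nu> by (simp add: ennreal_mult exponential_density_nonneg bern_tail_density_nonneg)
  then have "(\<integral>\<^sup>+y. ennreal (exponential_density (real \<nu>) (x - y)) * ennreal (bern_tail_density m \<nu> y) \<partial>lborel)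
      = (\<integral>\<^sup>+y. ennreal K * ennreal (exp (- y) * (1 - exp (- y)) ^ r * indicator {0..x} y) \<partial>lborel)"
    using K by (simp add: ennreal_mult')
  also have "\<dots> = ennreal K * ennreal ((1 - exp (- x)) ^ Suc r / real (Suc r))"
    using False by (simp add: nn_integral_cmult nn_integral_exp_mult_one_minus_exp_power)
  also have "\<dots> = ennreal (K * ((1 - exp (- x)) ^ Suc r / real (Suc r)))"
    by (rule ennreal_mult'[symmetric]) (rule K)
  also have "K * ((1 - exp (- x)) ^ Suc r / real (Suc r)) = bern_tail_density m (\<nu> - 1) x"
  proof -
    have r: "Suc r = m - 1 - (\<nu> - 1)" using \<nu> unfolding r_def by simp
    then have binom: "real \<nu> * real ((m - 1) choose \<nu>) = real (Suc r) * real ((m - 1) choose (\<nu> - 1))"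
      using mult_choose_eq_mult_choose_pred[OF \<nu>(1), of "m - 1"] by (metis of_nat_mult)
    have "K * ((1 - exp (- x)) ^ Suc r / real (Suc r))
        = real m * (real \<nu> * real ((m - 1) choose \<nu>)) * exp (- real \<nu> * x) * (1 - exp (- x)) ^ Suc r / real (Suc r)"
      unfolding K_def by (simp add: ac_simps)
    also have "\<dots> = real m * real ((m - 1) choose (\<nu> - 1)) * exp (- real \<nu> * x) * (1 - exp (- x)) ^ Suc r"
      unfolding binom by (simp del: of_nat_Suc)
    also have "\<dots> = bern_tail_density m (\<nu> - 1) x"
      using False \<nu> r by (simp add: bern_tail_density_def)
    finally show ?thesis .
  qed
  finally show ?thesis .
qed

lemma emeasure_bern_tail_density_atLeast:
  assumes "\<nu> < m" "0 \<le> a"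
  shows "emeasure (density lborel (bern_tail_density m \<nu>)) {a..} = ennreal (bern_tail m \<nu> (exp (- a)))"
proof -
  have "emeasure (density lborel (bern_tail_density m \<nu>)) {a..}
      = (\<integral>\<^sup>+x. ennreal (bern_tail_density m \<nu> x) * indicator {a..} x \<partial>lborel)"
    by (simp add: emeasure_density)
  also have "\<dots> = 0 - (- bern_tail m \<nu> (exp (- a)))"
  proof (rule nn_integral_FTC_atLeast)
    fix x assume x: "a \<le> x"
    have d: "DERIV (\<lambda>x. - bern_tail m \<nu> (exp (- x))) x :>
       - (real m * real ((m - 1) choose \<nu>) * exp (- x) ^ \<nu> * (1 - exp (- x)) ^ (m - 1 - \<nu>) * (exp (- x) * (- 1)))"
      by (intro DERIV_minus DERIV_chain2[OF bern_tail_DERIV[OF assms(1)]]) (auto intro!: derivative_eq_intros)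
    have "exp (- x) ^ \<nu> * exp (- x) = exp (- (real \<nu> + 1) * x)"
      by (simp add: exp_of_nat_mult[symmetric] exp_add[symmetric] algebra_simps)
    then show "DERIV (\<lambda>x. - bern_tail m \<nu> (exp (- x))) x :> bern_tail_density m \<nu> x"
      using x assms by (intro DERIV_cong[OF d]) (simp add: bern_tail_density_def algebra_simps)
  next
    have "((\<lambda>x::real. exp (- x)) \<longlongrightarrow> (0::real)) at_top"
      by (intro filterlim_compose[OF exp_at_bot] filterlim_uminus_at_bot_at_top)
    then have "((\<lambda>x. bern_tail m \<nu> (exp (- x))) \<longlongrightarrow> bern_tail m \<nu> 0) at_top"
      by (intro isCont_tendsto_compose[OF isCont_bern_tail])
    then show "((\<lambda>x. - bern_tail m \<nu> (exp (- x))) \<longlongrightarrow> 0) at_top"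
      using tendsto_minus by (fastforce simp: bern_tail_0)
  qed (simp_all add: bern_tail_density_nonneg)
  finally show ?thesis by simp
qed

lemma emeasure_bern_tail_density_greaterThan:
  assumes "\<nu> < m"
  shows "emeasure (density lborel (bern_tail_density m \<nu>)) {a<..} = ennreal (bern_tail m \<nu> (exp (- max a 0)))"
proof -
  have "emeasure (density lborel (bern_tail_density m \<nu>)) {a<..}
      = (\<integral>\<^sup>+x. ennreal (bern_tail_density m \<nu> x) * indicator {a<..} x \<partial>lborel)"
    by (simp add: emeasure_density)
  also have "\<dots> = (\<integral>\<^sup>+x. ennreal (bern_tail_density m \<nu> x) * indicator {max a 0..} x \<partial>lborel)"
  proof (cases "0 \<le> a")
    case True
    then show ?thesis
      using AE_lborel_singleton[of a]
      by (intro nn_integral_cong_AE) (auto elim!: eventually_mono split: split_indicator)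
  next
    case False
    then show ?thesis
      by (intro nn_integral_cong) (auto simp: bern_tail_density_def split: split_indicator)
  qed
  also have "\<dots> = emeasure (density lborel (bern_tail_density m \<nu>)) {max a 0..}"
    by (simp add: emeasure_density)
  finally show ?thesis
    using emeasure_bern_tail_density_atLeast[OF assms, of "max a 0"] by simp
qed

lemma prob_space_bern_tail_density:
  assumes "\<nu> < m"
  shows "prob_space (density lborel (bern_tail_density m \<nu>))"
proof
  have "emeasure (density lborel (bern_tail_density m \<nu>)) UNIV
      = (\<integral>\<^sup>+x. ennreal (bern_tail_density m \<nu> x) * indicator {0..} x \<partial>lborel)"
    by (auto simp: emeasure_density bern_tail_density_def intro!: nn_integral_cong split: split_indicator)
  also have "\<dots> = 1"
    using emeasure_bern_tail_density_atLeast[OF assms order_refl] bern_tail_1[OF assms]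
    by (simp add: emeasure_density)
  finally show "emeasure (density lborel (bern_tail_density m \<nu>)) (space (density lborel (bern_tail_density m \<nu>))) = 1"
    by simp
qed

lemma density_bern_tail_density_eq_convolution:
  assumes "Suc \<nu> < m"
  shows "density lborel (bern_tail_density m \<nu>)
       = convolution (density lborel (exponential_density (real (Suc \<nu>))))
           (density lborel (bern_tail_density m (Suc \<nu>)))"
proof -
  have "(\<lambda>x. ennreal (bern_tail_density m \<nu> x))
      = (\<lambda>x. \<integral>\<^sup>+y. ennreal (exponential_density (real (Suc \<nu>)) (x - y))
             * ennreal (bern_tail_density m (Suc \<nu>) y) \<partial>lborel)"
    using convolution_exponential_bern_tail_density[of "Suc \<nu>" m] assms by (simp add: fun_eq_iff)
  then show ?thesis
    using prob_space_exponential_density[of "real (Suc \<nu>)"] prob_space_bern_tail_density[OF assms]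
    by (simp add: convolution_density prob_space_def)
qed

lemma bern_tail_density_eq_erlang_mixture:
  assumes "\<nu> < m"
  shows "density lborel (bern_tail_density m \<nu>)
       = density lborel (erlang_mixture (real m) (sum_pmf {Suc \<nu>..m} (\<lambda>j. shifted_geometric_pmf (real j / real m))))"
proof -
  let ?Q = "\<lambda>j. shifted_geometric_pmf (real j / real m)"
  have m: "0 < real m" using assms by simp
  have exponential: "erlang_mixture (real m) (?Q j) = (\<lambda>x. ennreal (exponential_density (real j) x))"
    if "1 \<le> j" "j \<le> m" for j
    using erlang_mixture_shifted_geometric[OF m, of "real j / real m"] that by (simp add: fun_eq_iff)
  have "\<nu> \<le> m - 1" using assms by simp
  then show ?thesis
  proof (induction \<nu> rule: inc_induct)
    case base
    have "(\<lambda>x. ennreal (exponential_density (real m) x)) = bern_tail_density m (m - 1)"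
      using assms by (auto simp: fun_eq_iff bern_tail_density_def exponential_density_def algebra_simps)
    moreover have "Suc (m - 1) = m" using assms by simp
    ultimately show ?case
      using exponential[of m] assms by (simp add: sum_pmf_singleton)
  next
    case (step \<nu>)
    let ?P = "sum_pmf {Suc (Suc \<nu>)..m} ?Q"
    have P0: "pmf ?P 0 = 0"
      using step.hyps by (intro pmf_sum_pmf_0 pmf_shifted_geometric_0) auto
    have "density lborel (bern_tail_density m \<nu>)
        = convolution (density lborel (erlang_mixture (real m) (?Q (Suc \<nu>))))
            (density lborel (erlang_mixture (real m) ?P))"
      using density_bern_tail_density_eq_convolution[of \<nu> m] exponential[of "Suc \<nu>"] step by simp
    also have "\<dots> = density lborel (erlang_mixture (real m) (add_pmf (?Q (Suc \<nu>)) ?P))"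
      by (rule convolution_erlang_mixture[OF m pmf_shifted_geometric_0 P0])
    also have "add_pmf (?Q (Suc \<nu>)) ?P = sum_pmf {Suc \<nu>..m} ?Q"
      using step.hyps by (simp add: sum_pmf_insert Icc_eq_insert_lb_nat)
    finally show ?case .
  qed
qed

section \<open>The Bernstein copula as a mixture of tail products\<close>

definition grid_shift :: "nat \<Rightarrow> nat set \<Rightarrow> (nat \<Rightarrow> nat) \<Rightarrow> nat \<Rightarrow> nat" where
  "grid_shift n S \<nu> = (\<lambda>i. if i < n then \<nu> i + (if i \<in> S then 1 else 0) else undefined)"

definition grid_unshift :: "nat \<Rightarrow> nat set \<Rightarrow> (nat \<Rightarrow> nat) \<Rightarrow> nat \<Rightarrow> nat" where
  "grid_unshift n S \<mu> = (\<lambda>i. if i < n then \<mu> i - (if i \<in> S then 1 else 0) else undefined)"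

definition shifted_grid :: "nat \<Rightarrow> nat \<Rightarrow> nat set \<Rightarrow> (nat \<Rightarrow> nat) set" where
  "shifted_grid n m S = {\<mu> \<in> alpha_grid n m. \<forall>i<n. (i \<in> S \<longrightarrow> 1 \<le> \<mu> i) \<and> (i \<notin> S \<longrightarrow> \<mu> i < m)}"

lemma bern_gamma_grid_shift:
  "bern_gamma n \<alpha> \<nu> = (\<Sum>S\<in>Pow {..<n}. (-1) ^ (n + card S) * \<alpha> (grid_shift n S \<nu>))"
  unfolding bern_gamma_def grid_shift_def ..

lemma grid_unshift_shift: "\<nu> \<in> gamma_grid n m \<Longrightarrow> grid_unshift n S (grid_shift n S \<nu>) = \<nu>"
  unfolding grid_unshift_def grid_shift_def gamma_grid_def by (auto simp: fun_eq_iff PiE_def extensional_def)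

lemma bij_betw_grid_shift:
  assumes "S \<subseteq> {..<n}"
  shows "bij_betw (grid_shift n S) (gamma_grid n m) (shifted_grid n m S)"
proof (rule bij_betw_byWitness[where f' = "grid_unshift n S"])
  show "\<forall>\<nu>\<in>gamma_grid n m. grid_unshift n S (grid_shift n S \<nu>) = \<nu>"
    by (simp add: grid_unshift_shift)
  show "\<forall>\<mu>\<in>shifted_grid n m S. grid_shift n S (grid_unshift n S \<mu>) = \<mu>"
    unfolding shifted_grid_def grid_unshift_def grid_shift_def alpha_grid_def
    by (auto simp: fun_eq_iff PiE_def extensional_def)
  show "grid_shift n S ` gamma_grid n m \<subseteq> shifted_grid n m S"
    using assms unfolding shifted_grid_def grid_shift_def gamma_grid_def alpha_grid_def
    by (auto simp: PiE_def extensional_def Suc_le_eq Pi_iff less_imp_le)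
  show "grid_unshift n S ` shifted_grid n m S \<subseteq> gamma_grid n m"
  proof (intro image_subsetI)
    fix \<mu> assume "\<mu> \<in> shifted_grid n m S"
    then have "\<mu> i \<le> m" "i \<in> S \<longrightarrow> 1 \<le> \<mu> i" "i \<notin> S \<longrightarrow> \<mu> i < m" if "i < n" for i
      using that unfolding shifted_grid_def alpha_grid_def by auto
    then have "grid_unshift n S \<mu> i \<in> {..<m}" if "i \<in> {..<n}" for i
      using that by (fastforce simp: grid_unshift_def)
    then show "grid_unshift n S \<mu> \<in> gamma_grid n m"
      unfolding gamma_grid_def by (intro PiE_I) (auto simp: grid_unshift_def)
  qed
qed

lemma minus_one_power_add:
  assumes "s \<le> n"
  shows "(-1::real) ^ (n + s) = (-1) ^ (n - s)"
proof -
  have "(-1::real) ^ (n + s) = (-1) ^ ((n - s) + 2 * s)"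
    using assms by (simp add: algebra_simps)
  then show ?thesis by (simp add: power_add power_mult)
qed

lemma prod_bern_G_minus_indicator_eq_sum_shifted_grid:
  assumes m: "1 \<le> m" and \<mu>: "\<mu> \<in> alpha_grid n m"
  shows "(\<Prod>i<n. bern_G m (\<mu> i) (u i) - (if \<mu> i = 0 then 1 else 0))
       = (\<Sum>S\<in>Pow {..<n}. if \<mu> \<in> shifted_grid n m S
            then (-1) ^ (n + card S) * (\<Prod>i<n. bern_tail m (grid_unshift n S \<mu> i) (u i)) else 0)"
proof -
  let ?A = "{..<n}"
  define f1 where "f1 i = (if 1 \<le> \<mu> i then bern_tail m (\<mu> i - 1) (u i) else 0)" for i
  define f2 where "f2 i = (if \<mu> i < m then - bern_tail m (\<mu> i) (u i) else 0)" for i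
  have "\<mu> i \<le> m" if "i \<in> ?A" for i
    using \<mu> that unfolding alpha_grid_def by auto
  then have "(\<Prod>i<n. bern_G m (\<mu> i) (u i) - (if \<mu> i = 0 then 1 else 0)) = (\<Prod>i\<in>?A. f1 i + f2 i)"
    using bern_tail_diff[OF _ m] unfolding f1_def f2_def by (intro prod.cong refl) auto
  also have "\<dots> = (\<Sum>S\<in>Pow ?A. (\<Prod>i\<in>S. f1 i) * (\<Prod>i\<in>?A - S. f2 i))"
    by (rule prod_add) simp
  also have "\<dots> = (\<Sum>S\<in>Pow ?A. if \<mu> \<in> shifted_grid n m S
            then (-1) ^ (n + card S) * (\<Prod>i<n. bern_tail m (grid_unshift n S \<mu> i) (u i)) else 0)"
  proof (intro sum.cong refl)
    fix S assume "S \<in> Pow ?A"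
    then have S: "S \<subseteq> ?A" "finite S" by (auto intro: finite_subset)
    let ?T = "\<lambda>i. bern_tail m (grid_unshift n S \<mu> i) (u i)"
    show "(\<Prod>i\<in>S. f1 i) * (\<Prod>i\<in>?A - S. f2 i)
        = (if \<mu> \<in> shifted_grid n m S then (-1) ^ (n + card S) * (\<Prod>i<n. ?T i) else 0)"
    proof (cases "\<mu> \<in> shifted_grid n m S")
      case True
      then have "(\<Prod>i\<in>S. f1 i) = (\<Prod>i\<in>S. ?T i)" "(\<Prod>i\<in>?A - S. f2 i) = (\<Prod>i\<in>?A - S. - ?T i)"
        using S unfolding f1_def f2_def grid_unshift_def shifted_grid_def by (auto intro!: prod.cong)
      moreover have "(\<Prod>i\<in>?A - S. - ?T i) = (-1) ^ (n - card S) * (\<Prod>i\<in>?A - S. ?T i)"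
        using S by (simp add: prod_uminus card_Diff_subset)
      moreover have "(\<Prod>i<n. ?T i) = (\<Prod>i\<in>S. ?T i) * (\<Prod>i\<in>?A - S. ?T i)"
        using prod.subset_diff[OF S(1), of ?T] by (simp add: mult.commute)
      moreover have "card S \<le> n"
        using card_mono[OF _ S(1)] by simp
      ultimately show ?thesis
        using True by (simp add: minus_one_power_add)
    next
      case False
      then obtain i where i: "i < n" "(i \<in> S \<and> \<mu> i = 0) \<or> (i \<notin> S \<and> \<mu> i \<ge> m)"
        using \<mu> unfolding shifted_grid_def by auto
      then have "(\<Prod>i\<in>S. f1 i) = 0 \<or> (\<Prod>i\<in>?A - S. f2 i) = 0"
        using S by (auto simp: f1_def f2_def intro!: prod_zero bexI[of _ i])
      then show ?thesis using False by auto
    qed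
  qed
  finally show ?thesis .
qed

lemma sum_bern_gamma_prod_bern_tail:
  assumes m: "1 \<le> m"
  shows "(\<Sum>\<nu>\<in>gamma_grid n m. bern_gamma n \<alpha> \<nu> * (\<Prod>i<n. bern_tail m (\<nu> i) (u i)))
       = (\<Sum>\<mu>\<in>alpha_grid n m. \<alpha> \<mu> * (\<Prod>i<n. bern_G m (\<mu> i) (u i) - (if \<mu> i = 0 then 1 else 0)))"
proof -
  let ?P = "\<lambda>\<nu>. \<Prod>i<n. bern_tail m (\<nu> i) (u i)"
  let ?sg = "\<lambda>S. (-1::real) ^ (n + card S)"
  have fin: "finite (alpha_grid n m)"
    unfolding alpha_grid_def by (simp add: finite_PiE)
  have "(\<Sum>\<nu>\<in>gamma_grid n m. bern_gamma n \<alpha> \<nu> * ?P \<nu>)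
      = (\<Sum>S\<in>Pow {..<n}. \<Sum>\<nu>\<in>gamma_grid n m. ?sg S * \<alpha> (grid_shift n S \<nu>) * ?P (grid_unshift n S (grid_shift n S \<nu>)))"
    unfolding bern_gamma_grid_shift sum_distrib_right
    by (subst sum.swap) (simp add: grid_unshift_shift)
  also have "\<dots> = (\<Sum>S\<in>Pow {..<n}. \<Sum>\<mu>\<in>shifted_grid n m S. ?sg S * \<alpha> \<mu> * ?P (grid_unshift n S \<mu>))"
    by (intro sum.cong refl sum.reindex_bij_betw bij_betw_grid_shift) auto
  also have "\<dots> = (\<Sum>S\<in>Pow {..<n}. \<Sum>\<mu>\<in>alpha_grid n m.
      \<alpha> \<mu> * (if \<mu> \<in> shifted_grid n m S then ?sg S * ?P (grid_unshift n S \<mu>) else 0))"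
  proof (rule sum.cong[OF refl])
    fix S
    have "shifted_grid n m S \<subseteq> alpha_grid n m" unfolding shifted_grid_def by auto
    then show "(\<Sum>\<mu>\<in>shifted_grid n m S. ?sg S * \<alpha> \<mu> * ?P (grid_unshift n S \<mu>))
        = (\<Sum>\<mu>\<in>alpha_grid n m. \<alpha> \<mu> * (if \<mu> \<in> shifted_grid n m S then ?sg S * ?P (grid_unshift n S \<mu>) else 0))"
      using fin by (simp add: sum.If_cases Int_absorb1 if_distrib[of "\<lambda>x. \<alpha> _ * x"] mult_ac cong: if_cong)
  qed
  also have "\<dots> = (\<Sum>\<mu>\<in>alpha_grid n m. \<alpha> \<mu> * (\<Prod>i<n. bern_G m (\<mu> i) (u i) - (if \<mu> i = 0 then 1 else 0)))"
    by (subst sum.swap) (simp add: sum_distrib_left[symmetric] prod_bern_G_minus_indicator_eq_sum_shifted_grid[OF m])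
  finally show ?thesis .
qed

lemma prod_bern_G_minus_indicator_eq_sum_Pow:
  fixes n :: nat
  shows "(\<Prod>i<n. bern_G m (\<mu> i) (u i) - (if \<mu> i = 0 then 1 else 0))
     = (\<Sum>X\<in>Pow {..<n}. (-1) ^ card X * (\<Prod>i<n. bern_G m (\<mu> i) (if i \<in> X then 0 else u i)))"
proof -
  let ?A = "{..<n}"
  let ?u = "\<lambda>X i. if i \<in> X then 0 else u i"
  have "(\<Prod>i<n. bern_G m (\<mu> i) (u i) - (if \<mu> i = 0 then 1 else 0))
      = (\<Prod>i\<in>?A. - bern_G m (\<mu> i) 0 + bern_G m (\<mu> i) (u i))"
    by (simp add: bern_G_at_0)
  also have "\<dots> = (\<Sum>X\<in>Pow ?A. (\<Prod>i\<in>X. - bern_G m (\<mu> i) 0) * (\<Prod>i\<in>?A - X. bern_G m (\<mu> i) (u i)))"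
    by (rule prod_add) simp
  also have "\<dots> = (\<Sum>X\<in>Pow ?A. (-1) ^ card X * (\<Prod>i<n. bern_G m (\<mu> i) (?u X i)))"
  proof (intro sum.cong refl)
    fix X assume "X \<in> Pow ?A"
    then have X: "X \<subseteq> ?A" by simp
    have "(\<Prod>i<n. bern_G m (\<mu> i) (?u X i))
        = (\<Prod>i\<in>X. bern_G m (\<mu> i) (?u X i)) * (\<Prod>i\<in>?A - X. bern_G m (\<mu> i) (?u X i))"
      using prod.subset_diff[OF X, of "\<lambda>i. bern_G m (\<mu> i) (?u X i)"] by (simp add: mult.commute)
    also have "\<dots> = (\<Prod>i\<in>X. bern_G m (\<mu> i) 0) * (\<Prod>i\<in>?A - X. bern_G m (\<mu> i) (u i))"
      by (intro arg_cong2[where f = "(*)"] prod.cong) auto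
    finally show "(\<Prod>i\<in>X. - bern_G m (\<mu> i) 0) * (\<Prod>i\<in>?A - X. bern_G m (\<mu> i) (u i))
        = (-1) ^ card X * (\<Prod>i<n. bern_G m (\<mu> i) (?u X i))"
      by (simp add: prod_uminus)
  qed
  finally show ?thesis .
qed

lemma bernstein_copula_eq_sum_prod_minus_indicator:
  assumes grounded: "\<forall>u\<in>unit_cube n. (\<exists>i<n. u i = 0) \<longrightarrow> bernstein_copula n m \<alpha> u = 0"
    and u: "u \<in> unit_cube n"
  shows "(\<Sum>\<mu>\<in>alpha_grid n m. \<alpha> \<mu> * (\<Prod>i<n. bern_G m (\<mu> i) (u i) - (if \<mu> i = 0 then 1 else 0)))
       = bernstein_copula n m \<alpha> u"
proof -
  let ?A = "{..<n}"
  let ?u = "\<lambda>X i. if i \<in> X then 0 else u i"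
  have "(\<Sum>\<mu>\<in>alpha_grid n m. \<alpha> \<mu> * (\<Prod>i<n. bern_G m (\<mu> i) (u i) - (if \<mu> i = 0 then 1 else 0)))
      = (\<Sum>\<mu>\<in>alpha_grid n m. \<Sum>X\<in>Pow ?A. (-1) ^ card X * (\<alpha> \<mu> * (\<Prod>i<n. bern_G m (\<mu> i) (?u X i))))"
    unfolding prod_bern_G_minus_indicator_eq_sum_Pow by (simp add: sum_distrib_left mult.left_commute)
  also have "\<dots> = (\<Sum>X\<in>Pow ?A. (-1) ^ card X * bernstein_copula n m \<alpha> (?u X))"
    unfolding bernstein_copula_def sum_distrib_left by (rule sum.swap)
  also have "\<dots> = (\<Sum>X\<in>{{}}. (-1) ^ card X * bernstein_copula n m \<alpha> (?u X))"
  proof (rule sum.mono_neutral_right)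
    show "\<forall>X\<in>Pow ?A - {{}}. (-1) ^ card X * bernstein_copula n m \<alpha> (?u X) = 0"
    proof
      fix X assume "X \<in> Pow ?A - {{}}"
      then obtain i where "i \<in> X" "i < n" by auto
      have "?u X \<in> unit_cube n" using u by (auto simp: unit_cube_def)
      moreover have "\<exists>i<n. ?u X i = 0" using \<open>i \<in> X\<close> \<open>i < n\<close> by auto
      ultimately have "bernstein_copula n m \<alpha> (?u X) = 0"
        by (rule grounded[rule_format])
      then show "(-1) ^ card X * bernstein_copula n m \<alpha> (?u X) = 0" by simp
    qed
  qed auto
  finally show ?thesis by simp
qed

lemma sum_bern_gamma_prod_bern_tail_eq_bernstein_copula:
  assumes "1 \<le> m" and "is_copula n (bernstein_copula n m \<alpha>)" and "u \<in> unit_cube n"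
  shows "(\<Sum>\<nu>\<in>gamma_grid n m. bern_gamma n \<alpha> \<nu> * (\<Prod>i<n. bern_tail m (\<nu> i) (u i)))
       = bernstein_copula n m \<alpha> u"
  using assms unfolding is_copula_def
  by (simp add: sum_bern_gamma_prod_bern_tail bernstein_copula_eq_sum_prod_minus_indicator)

section \<open>The law of K\<close>

lemma finite_gamma_grid: "finite (gamma_grid n m)"
  unfolding gamma_grid_def by (simp add: finite_PiE)

lemma map_pmf_K_of_Delta_pmf:
  "map_pmf (K_of n m \<nu>) (Delta_pmf n m)
     = sum_pmf {..<n} (\<lambda>i. sum_pmf {Suc (\<nu> i)..m} (\<lambda>j. shifted_geometric_pmf (real j / real m)))"
proof -
  let ?J = "\<lambda>i. Pair i ` {Suc (\<nu> i)..m}"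
  let ?Q = "\<lambda>(i::nat, j). shifted_geometric_pmf (real j / real m)"
  have K: "K_of n m \<nu> d = (\<Sum>x\<in>(\<Union>i<n. ?J i). d x)" for d
  proof -
    have "K_of n m \<nu> d = (\<Sum>x\<in>Sigma {..<n} (\<lambda>i. {Suc (\<nu> i)..m}). d x)"
      unfolding K_of_def by (subst sum.Sigma) (auto simp: case_prod_beta')
    also have "Sigma {..<n} (\<lambda>i. {Suc (\<nu> i)..m}) = (\<Union>i<n. ?J i)" by auto
    finally show ?thesis .
  qed
  have "map_pmf (K_of n m \<nu>) (Delta_pmf n m) = sum_pmf (\<Union>i<n. ?J i) ?Q"
    unfolding Delta_pmf_def K[abs_def] by (rule map_sum_Pi_pmf) auto
  also have "\<dots> = sum_pmf {..<n} (\<lambda>i. sum_pmf (?J i) ?Q)"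
    by (subst sum_pmf_UN) (auto simp: disjoint_family_on_def)
  also have "\<dots> = sum_pmf {..<n} (\<lambda>i. sum_pmf {Suc (\<nu> i)..m} (\<lambda>j. shifted_geometric_pmf (real j / real m)))"
    by (subst sum_pmf_reindex) (auto simp: inj_on_def)
  finally show ?thesis .
qed

lemma pmf_K_pmf:
  assumes N_law: "\<And>\<nu>. pmf Npmf \<nu> = (if \<nu> \<in> gamma_grid n m then bern_gamma n \<alpha> \<nu> else 0)"
  shows "pmf (K_pmf n m Npmf) l = (\<Sum>\<nu>\<in>gamma_grid n m. bern_gamma n \<alpha> \<nu> * pmf (map_pmf (K_of n m \<nu>) (Delta_pmf n m)) l)"
proof -
  have "pmf (K_pmf n m Npmf) l = (\<integral>\<nu>. pmf (map_pmf (K_of n m \<nu>) (Delta_pmf n m)) l \<partial>measure_pmf Npmf)"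
    unfolding K_pmf_def map_pmf_def[symmetric] pmf_bind ..
  also have "\<dots> = (\<Sum>\<nu>\<in>gamma_grid n m. pmf Npmf \<nu> *\<^sub>R pmf (map_pmf (K_of n m \<nu>) (Delta_pmf n m)) l)"
    using N_law finite_gamma_grid by (intro integral_measure_pmf) (auto simp: set_pmf_eq split: if_splits)
  finally show ?thesis
    using N_law by (simp cong: sum.cong)
qed

lemma K_of_ge:
  assumes \<nu>: "\<nu> \<in> gamma_grid n m" and d: "d \<in> set_pmf (Delta_pmf n m)"
  shows "n \<le> K_of n m \<nu> d"
proof -
  have "1 \<le> d (i, m)" if i: "i < n" for i
  proof -
    have "set_pmf (Delta_pmf n m)
        \<subseteq> PiE_dflt ({..<n} \<times> {1..m}) 0 (set_pmf \<circ> (\<lambda>(i, j). shifted_geometric_pmf (real j / real m)))"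
      unfolding Delta_pmf_def by (rule set_Pi_pmf_subset') simp
    then have "d \<in> PiE_dflt ({..<n} \<times> {1..m}) 0 (set_pmf \<circ> (\<lambda>(i, j). shifted_geometric_pmf (real j / real m)))"
      using d by blast
    moreover have "(i, m) \<in> {..<n} \<times> {1..m}" using \<nu> i by (auto simp: gamma_grid_def PiE_iff)
    ultimately have "d (i, m) \<in> (set_pmf \<circ> (\<lambda>(i, j). shifted_geometric_pmf (real j / real m))) (i, m)"
      unfolding PiE_dflt_def by blast
    then show ?thesis
      using pmf_shifted_geometric_0 by (cases "d (i, m)") (auto simp: set_pmf_eq)
  qed
  moreover have "d (i, m) \<le> (\<Sum>j\<in>{\<nu> i + 1..m}. d (i, j))" if "i < n" for i
    using \<nu> that by (intro member_le_sum) (auto simp: gamma_grid_def PiE_iff Suc_le_eq)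
  ultimately have "(\<Sum>i<n. 1) \<le> (\<Sum>i<n. \<Sum>j\<in>{\<nu> i + 1..m}. d (i, j))"
    by (intro sum_mono) (metis lessThan_iff order_trans)
  then show ?thesis
    unfolding K_of_def by simp
qed

lemma pmf_K_pmf_less:
  assumes N_law: "\<And>\<nu>. pmf Npmf \<nu> = (if \<nu> \<in> gamma_grid n m then bern_gamma n \<alpha> \<nu> else 0)"
    and "l < n"
  shows "pmf (K_pmf n m Npmf) l = 0"
proof -
  have "pmf (map_pmf (K_of n m \<nu>) (Delta_pmf n m)) l = 0" if "\<nu> \<in> gamma_grid n m" for \<nu>
    using K_of_ge[OF that] \<open>l < n\<close> by (fastforce simp: pmf_eq_0_set_pmf)
  then show ?thesis
    by (simp add: pmf_K_pmf[OF N_law])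
qed

lemma erlang_mixture_K_pmf:
  assumes N_law: "\<And>\<nu>. pmf Npmf \<nu> = (if \<nu> \<in> gamma_grid n m then bern_gamma n \<alpha> \<nu> else 0)"
  shows "erlang_mixture c (K_pmf n m Npmf) x
       = (\<Sum>\<nu>\<in>gamma_grid n m. ennreal (bern_gamma n \<alpha> \<nu>) * erlang_mixture c (map_pmf (K_of n m \<nu>) (Delta_pmf n m)) x)"
proof -
  have "erlang_mixture c (K_pmf n m Npmf) x
      = (\<integral>\<^sup>+\<nu>. erlang_mixture c (map_pmf (K_of n m \<nu>) (Delta_pmf n m)) x \<partial>measure_pmf Npmf)"
    unfolding erlang_mixture_def K_pmf_def map_pmf_def[symmetric] nn_integral_bind_pmf ..
  also have "\<dots> = (\<Sum>\<nu>\<in>gamma_grid n m. erlang_mixture c (map_pmf (K_of n m \<nu>) (Delta_pmf n m)) x * pmf Npmf \<nu>)"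
    using N_law finite_gamma_grid by (intro nn_integral_measure_pmf_support) (auto simp: set_pmf_eq split: if_splits)
  finally show ?thesis
    using N_law by (simp add: mult.commute cong: sum.cong)
qed

lemma distr_sum_PiM_bern_tail_density:
  assumes n: "1 \<le> n" and \<nu>: "\<nu> \<in> gamma_grid n m"
  shows "distr (PiM {..<n} (\<lambda>i. density lborel (bern_tail_density m (\<nu> i)))) lborel (\<lambda>z. \<Sum>i<n. z i)
       = density lborel (erlang_mixture (real m) (map_pmf (K_of n m \<nu>) (Delta_pmf n m)))"
proof -
  let ?p = "\<lambda>i. sum_pmf {Suc (\<nu> i)..m} (\<lambda>j. shifted_geometric_pmf (real j / real m))"
  have \<nu>m: "\<nu> i < m" if "i < n" for i
    using \<nu> that by (auto simp: gamma_grid_def PiE_iff)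
  then have m: "0 < real m" using n by fastforce
  have "PiM {..<n} (\<lambda>i. density lborel (bern_tail_density m (\<nu> i)))
      = PiM {..<n} (\<lambda>i. density lborel (erlang_mixture (real m) (?p i)))"
    by (intro PiM_cong refl) (simp add: bern_tail_density_eq_erlang_mixture \<nu>m)
  moreover have "pmf (?p i) 0 = 0" if "i < n" for i
    using \<nu>m[OF that] by (intro pmf_sum_pmf_0) (auto simp: pmf_shifted_geometric_0)
  ultimately show ?thesis
    using distr_sum_PiM_erlang_mixture[of "{..<n}" "real m" ?p] n m
    by (simp add: map_pmf_K_of_Delta_pmf lessThan_empty_iff)
qed

section \<open>The joint law of the exponential vector\<close>

definition bernstein_exp_density :: "nat \<Rightarrow> nat \<Rightarrow> ((nat \<Rightarrow> nat) \<Rightarrow> real) \<Rightarrow> (nat \<Rightarrow> real) \<Rightarrow> ennreal" where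
  "bernstein_exp_density n m \<alpha> z =
     (\<Sum>\<nu>\<in>gamma_grid n m. ennreal (bern_gamma n \<alpha> \<nu>) * (\<Prod>i<n. ennreal (bern_tail_density m (\<nu> i) (z i))))"

lemma borel_measurable_bernstein_exp_density[measurable]:
  "bernstein_exp_density n m \<alpha> \<in> borel_measurable (PiM {..<n} (\<lambda>_. lborel))"
  unfolding bernstein_exp_density_def by measurable

lemma nn_integral_prod_bern_tail_density_orthant:
  assumes \<nu>: "\<nu> \<in> gamma_grid n m"
  shows "(\<integral>\<^sup>+z. (\<Prod>i<n. ennreal (bern_tail_density m (\<nu> i) (z i)) * indicator {a i<..} (z i)) \<partial>PiM {..<n} (\<lambda>_. lborel))
       = ennreal (\<Prod>i<n. bern_tail m (\<nu> i) (exp (- max (a i) 0)))"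
proof -
  interpret lborel: product_sigma_finite "\<lambda>_::nat. lborel::real measure"
    unfolding product_sigma_finite_def by (simp add: sigma_finite_lborel)
  have "\<nu> i < m" if "i < n" for i
    using \<nu> that by (auto simp: gamma_grid_def PiE_iff)
  then have "(\<integral>\<^sup>+z. (\<Prod>i<n. ennreal (bern_tail_density m (\<nu> i) (z i)) * indicator {a i<..} (z i)) \<partial>PiM {..<n} (\<lambda>_. lborel))
      = (\<Prod>i<n. ennreal (bern_tail m (\<nu> i) (exp (- max (a i) 0))))"
    by (subst lborel.product_nn_integral_prod)
      (auto intro!: prod.cong simp: emeasure_bern_tail_density_greaterThan simp flip: emeasure_density)
  then show ?thesis
    by (simp add: prod_ennreal bern_tail_nonneg)
qed

lemma emeasure_bernstein_exp_density_orthant: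
  assumes m: "1 \<le> m" and copula: "is_copula n (bernstein_copula n m \<alpha>)"
    and \<gamma>: "\<And>\<nu>. \<nu> \<in> gamma_grid n m \<Longrightarrow> 0 \<le> bern_gamma n \<alpha> \<nu>"
  shows "emeasure (density (PiM {..<n} (\<lambda>_. lborel)) (bernstein_exp_density n m \<alpha>)) (\<Pi>\<^sub>E i\<in>{..<n}. {a i<..})
       = ennreal (bernstein_copula n m \<alpha> (\<lambda>i. exp (- max (a i) 0)))"
proof -
  let ?L = "PiM {..<n} (\<lambda>_. lborel::real measure)"
  let ?T = "\<lambda>\<nu>. \<Prod>i<n. bern_tail m (\<nu> i) (exp (- max (a i) 0))"
  have T: "0 \<le> ?T \<nu>" for \<nu>
    by (intro prod_nonneg bern_tail_nonneg) auto
  have orthant: "(\<Pi>\<^sub>E i\<in>{..<n}. {a i<..}) \<in> sets ?L"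
    by (intro sets_PiM_I_finite) auto
  have "emeasure (density ?L (bernstein_exp_density n m \<alpha>)) (\<Pi>\<^sub>E i\<in>{..<n}. {a i<..})
      = (\<integral>\<^sup>+z. (\<Sum>\<nu>\<in>gamma_grid n m. ennreal (bern_gamma n \<alpha> \<nu>) *
          (\<Prod>i<n. ennreal (bern_tail_density m (\<nu> i) (z i)) * indicator {a i<..} (z i))) \<partial>?L)"
    unfolding emeasure_density[OF borel_measurable_bernstein_exp_density orthant]
    by (intro nn_integral_cong)
      (simp add: bernstein_exp_density_def space_PiM indicator_PiE_eq_prod sum_distrib_right prod.distrib mult.assoc)
  also have "\<dots> = (\<Sum>\<nu>\<in>gamma_grid n m. ennreal (bern_gamma n \<alpha> \<nu>) * ennreal (?T \<nu>))"
    by (subst nn_integral_sum)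
      (auto intro!: sum.cong simp: nn_integral_cmult nn_integral_prod_bern_tail_density_orthant)
  also have "\<dots> = ennreal (\<Sum>\<nu>\<in>gamma_grid n m. bern_gamma n \<alpha> \<nu> * ?T \<nu>)"
    using \<gamma> T by (simp add: sum_ennreal ennreal_mult[symmetric] cong: sum.cong)
  also have "\<dots> = ennreal (bernstein_copula n m \<alpha> (\<lambda>i. exp (- max (a i) 0)))"
    using sum_bern_gamma_prod_bern_tail_eq_bernstein_copula[OF m copula, of "\<lambda>i. exp (- max (a i) 0)"]
    by (simp add: unit_cube_def)
  finally show ?thesis .
qed

lemma distr_exp_vector_eq_bernstein_exp_density:
  fixes M :: "'a measure" and Z :: "nat \<Rightarrow> 'a \<Rightarrow> real"
  assumes m: "1 \<le> m" and copula: "is_copula n (bernstein_copula n m \<alpha>)" and M: "prob_space M"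
    and Z_exp: "\<And>i. i < n \<Longrightarrow> distributed M lborel (Z i) (exponential_density 1)"
    and Z_surv: "\<And>z. (\<forall>i<n. 0 \<le> z i) \<Longrightarrow>
        measure M {\<omega> \<in> space M. \<forall>i<n. Z i \<omega> > z i} = bernstein_copula n m \<alpha> (\<lambda>i. exp (- z i))"
    and \<gamma>: "\<And>\<nu>. \<nu> \<in> gamma_grid n m \<Longrightarrow> 0 \<le> bern_gamma n \<alpha> \<nu>"
  shows "distr M (PiM {..<n} (\<lambda>_. lborel)) (\<lambda>\<omega>. \<lambda>i\<in>{..<n}. Z i \<omega>)
       = density (PiM {..<n} (\<lambda>_. lborel)) (bernstein_exp_density n m \<alpha>)"
proof (rule PiM_lborel_measure_eqI_orthants)
  interpret prob_space M by (rule M)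
  have Z[measurable]: "Z i \<in> borel_measurable M" if "i \<in> {..<n}" for i
    using distributed_measurable[OF Z_exp] that by simp
  have "(\<lambda>\<omega>. \<lambda>i\<in>{..<n}. Z i \<omega>) \<in> measurable M (PiM {..<n} (\<lambda>_. lborel))"
    by (intro measurable_restrict) simp
  then have "prob_space (distr M (PiM {..<n} (\<lambda>_. lborel)) (\<lambda>\<omega>. \<lambda>i\<in>{..<n}. Z i \<omega>))"
    by (rule prob_space_distr)
  then show "finite_measure (distr M (PiM {..<n} (\<lambda>_. lborel)) (\<lambda>\<omega>. \<lambda>i\<in>{..<n}. Z i \<omega>))"
    by (simp add: prob_space_def)
  fix a :: "nat \<Rightarrow> real"
  have "emeasure (distr M (PiM {..<n} (\<lambda>_. lborel)) (\<lambda>\<omega>. \<lambda>i\<in>{..<n}. Z i \<omega>)) (\<Pi>\<^sub>E i\<in>{..<n}. {a i<..})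
      = emeasure M {\<omega> \<in> space M. \<forall>i\<in>{..<n}. a i < Z i \<omega>}"
    by (rule emeasure_distr_restrict_orthant) simp_all
  also have "\<dots> = emeasure M {\<omega> \<in> space M. \<forall>i\<in>{..<n}. max (a i) 0 < Z i \<omega>}"
  proof (rule emeasure_eq_AE)
    show "AE \<omega> in M. (\<omega> \<in> {\<omega> \<in> space M. \<forall>i\<in>{..<n}. a i < Z i \<omega>})
        = (\<omega> \<in> {\<omega> \<in> space M. \<forall>i\<in>{..<n}. max (a i) 0 < Z i \<omega>})"
    proof -
      have "AE \<omega> in M. \<forall>i\<in>{..<n}. 0 < Z i \<omega>"
        using Z_exp by (intro AE_finite_allI AE_exponential_pos) auto
      then show ?thesis by (auto elim: eventually_mono)
    qed
  qed (intro sets.sets_Collect_finite_All; simp)+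
  also have "\<dots> = ennreal (bernstein_copula n m \<alpha> (\<lambda>i. exp (- max (a i) 0)))"
    using Z_surv[of "\<lambda>i. max (a i) 0"] unfolding Ball_def lessThan_iff by (simp add: emeasure_eq_measure)
  finally show "emeasure (distr M (PiM {..<n} (\<lambda>_. lborel)) (\<lambda>\<omega>. \<lambda>i\<in>{..<n}. Z i \<omega>)) (\<Pi>\<^sub>E i\<in>{..<n}. {a i<..})
      = emeasure (density (PiM {..<n} (\<lambda>_. lborel)) (bernstein_exp_density n m \<alpha>)) (\<Pi>\<^sub>E i\<in>{..<n}. {a i<..})"
    by (simp add: emeasure_bernstein_exp_density_orthant[OF m copula \<gamma>])
qed (simp_all only: finite_lessThan sets_distr sets_density)

lemma distr_sum_bernstein_exp_density:
  assumes n: "1 \<le> n" and m: "1 \<le> m"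
  shows "distr (density (PiM {..<n} (\<lambda>_. lborel)) (bernstein_exp_density n m \<alpha>)) lborel (\<lambda>z. \<Sum>i<n. z i)
       = density lborel (\<lambda>x. \<Sum>\<nu>\<in>gamma_grid n m.
           ennreal (bern_gamma n \<alpha> \<nu>) * erlang_mixture (real m) (map_pmf (K_of n m \<nu>) (Delta_pmf n m)) x)"
  unfolding bernstein_exp_density_def
proof (rule distr_density_sum)
  fix \<nu> assume \<nu>: "\<nu> \<in> gamma_grid n m"
  then have "\<nu> i < m" if "i < n" for i
    using that by (auto simp: gamma_grid_def PiE_iff)
  then have "density (PiM {..<n} (\<lambda>_. lborel)) (\<lambda>z. \<Prod>i<n. ennreal (bern_tail_density m (\<nu> i) (z i)))
      = PiM {..<n} (\<lambda>i. density lborel (bern_tail_density m (\<nu> i)))"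
    by (intro PiM_density_eq_density_prod[symmetric] prob_space_bern_tail_density) auto
  then show "distr (density (PiM {..<n} (\<lambda>_. lborel)) (\<lambda>z. \<Prod>i<n. ennreal (bern_tail_density m (\<nu> i) (z i))))
      lborel (\<lambda>z. \<Sum>i<n. z i) = density lborel (erlang_mixture (real m) (map_pmf (K_of n m \<nu>) (Delta_pmf n m)))"
    using distr_sum_PiM_bern_tail_density[OF n \<nu>] by (simp cong: distr_cong)
qed (simp_all add: finite_gamma_grid)

lemma distributed_sum_exp_vector:
  fixes M :: "'a measure" and Z :: "nat \<Rightarrow> 'a \<Rightarrow> real"
  assumes n: "1 \<le> n" and m: "1 \<le> m" and copula: "is_copula n (bernstein_copula n m \<alpha>)"
    and M: "prob_space M"
    and Z_exp: "\<And>i. i < n \<Longrightarrow> distributed M lborel (Z i) (exponential_density 1)"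
    and Z_surv: "\<And>z. (\<forall>i<n. 0 \<le> z i) \<Longrightarrow>
        measure M {\<omega> \<in> space M. \<forall>i<n. Z i \<omega> > z i} = bernstein_copula n m \<alpha> (\<lambda>i. exp (- z i))"
    and N_law: "\<And>\<nu>. pmf Npmf \<nu> = (if \<nu> \<in> gamma_grid n m then bern_gamma n \<alpha> \<nu> else 0)"
  shows "distributed M lborel (\<lambda>\<omega>. \<Sum>i<n. Z i \<omega>) (erlang_mixture (real m) (K_pmf n m Npmf))"
proof -
  let ?L = "PiM {..<n} (\<lambda>_. lborel::real measure)"
  have \<gamma>: "0 \<le> bern_gamma n \<alpha> \<nu>" if "\<nu> \<in> gamma_grid n m" for \<nu>
    using N_law[of \<nu>] that by (metis pmf_nonneg)
  have Z[measurable]: "Z i \<in> borel_measurable M" if "i < n" for i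
    using distributed_measurable[OF Z_exp[OF that]] by simp
  have "distr M lborel (\<lambda>\<omega>. \<Sum>i<n. Z i \<omega>)
      = distr (distr M ?L (\<lambda>\<omega>. \<lambda>i\<in>{..<n}. Z i \<omega>)) lborel (\<lambda>z. \<Sum>i<n. z i)"
    by (subst distr_distr) (auto intro!: distr_cong measurable_restrict)
  also have "\<dots> = distr (density ?L (bernstein_exp_density n m \<alpha>)) lborel (\<lambda>z. \<Sum>i<n. z i)"
    by (simp add: distr_exp_vector_eq_bernstein_exp_density[OF m copula M Z_exp Z_surv \<gamma>])
  also have "\<dots> = density lborel (\<lambda>x. \<Sum>\<nu>\<in>gamma_grid n m.
      ennreal (bern_gamma n \<alpha> \<nu>) * erlang_mixture (real m) (map_pmf (K_of n m \<nu>) (Delta_pmf n m)) x)"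
    using n m by (simp add: distr_sum_bernstein_exp_density)
  also have "\<dots> = density lborel (erlang_mixture (real m) (K_pmf n m Npmf))"
    by (intro arg_cong[where f = "density lborel"] ext) (simp add: erlang_mixture_K_pmf[OF N_law])
  finally show ?thesis
    by (simp add: distributed_def)
qed

theorem theorem3:
  fixes n m :: nat
    and \<alpha> :: "(nat \<Rightarrow> nat) \<Rightarrow> real"
    and M :: "'a measure"
    and Z :: "nat \<Rightarrow> 'a \<Rightarrow> real"
    and Npmf :: "(nat \<Rightarrow> nat) pmf"
  assumes n: "n \<ge> 2" and m: "m \<ge> 1"
    and copula: "is_copula n (bernstein_copula n m \<alpha>)"
    and M: "prob_space M"
    and Z_exp: "\<And>i. i < n \<Longrightarrow> distributed M lborel (Z i) (exponential_density 1)"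
    and Z_surv: "\<And>z. (\<forall>i<n. 0 \<le> z i) \<Longrightarrow>
        measure M {\<omega> \<in> space M. \<forall>i<n. Z i \<omega> > z i}
          = bernstein_copula n m \<alpha> (\<lambda>i. exp (- z i))"
    and N_law: "\<And>\<nu>. pmf Npmf \<nu> = (if \<nu> \<in> gamma_grid n m then bern_gamma n \<alpha> \<nu> else 0)"
  shows "distributed M lborel (\<lambda>\<omega>. \<Sum>i<n. Z i \<omega>)
           (\<lambda>x. if 0 < x then
                   (\<Sum>k. pmf (K_pmf n m Npmf) (k + n) * exp (- real m * x) * x ^ (k + n - 1)
                          * real m ^ (k + n) / Gamma (real (k + n)))
                 else 0)
       \<and> (\<forall>l<n. pmf (K_pmf n m Npmf) l = 0)
       \<and> (\<forall>l. pmf (K_pmf n m Npmf) l =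
            (\<Sum>\<nu>\<in>gamma_grid n m. bern_gamma n \<alpha> \<nu> *
               measure_pmf.prob (Delta_pmf n m) {d. K_of n m \<nu> d = l}))"
proof -
  let ?K = "K_pmf n m Npmf"
  have K_small: "\<forall>l<n. pmf ?K l = 0"
    using pmf_K_pmf_less[OF N_law] by blast
  have "erlang_mixture (real m) ?K = (\<lambda>x. ennreal (if 0 < x then
      (\<Sum>k. pmf ?K (k + n) * exp (- real m * x) * x ^ (k + n - 1) * real m ^ (k + n) / Gamma (real (k + n)))
      else 0))"
    using n m K_small by (intro ext erlang_mixture_eq_Gamma_series) auto
  moreover have "distributed M lborel (\<lambda>\<omega>. \<Sum>i<n. Z i \<omega>) (erlang_mixture (real m) ?K)"
    using n by (intro distributed_sum_exp_vector[OF _ m copula M Z_exp Z_surv N_law]) simp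
  moreover have "\<forall>l. pmf ?K l = (\<Sum>\<nu>\<in>gamma_grid n m. bern_gamma n \<alpha> \<nu> *
      measure_pmf.prob (Delta_pmf n m) {d. K_of n m \<nu> d = l})"
    by (simp add: pmf_K_pmf[OF N_law] pmf_map vimage_def)
  ultimately show ?thesis
    using K_small by simp
qed

end
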